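(* Let $L:\mathbb{T}^d\times\mathbb{R}^d\to\mathbb{R}$ be continuous with $\lim_{|v|\to\infty}\inf_{x\in\mathbb{T}^d}L(x,v)/|v|=+\infty$, and let $(\varphi,\overline{H})$ be a viscosity solution to $H(x,-\nabla\varphi)=\overline{H}$. Then for every $r>0$, $T_r^+\varphi=\varphi-r\overline{H}$. Moreover, given $\varepsilon>0$, there exists $\varkappa_0>0$ such that for all $\varkappa\in(0,\varkappa_0]$, $r>0$ and $y\in\mathbb{T}^d$, \[\limsup_{d(\Delta)\downarrow0}\Big[\varphi(x_{y,\varkappa,r,\Delta}(r))+\int_0^rL(x_{y,\varkappa,r,\Delta}(t),v_{y,\varkappa,r,\Delta}(t))\,dt\Big]\le\varphi(y)-\overline{H}r+(r+1)\varepsilon,\] the limsup being over partitions $\Delta$ of $[0,r]$ with fineness tending to $0$.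
   Context: $\mathbb{T}^d=\mathbb{R}^d/\mathbb{Z}^d$; $x+v$ is the translate of $x\in\mathbb{T}^d$ by $v\in\mathbb{R}^d$. $H(x,p)=\max_{v\in\mathbb{R}^d}[pv-L(x,v)]$. Hadamard sub/superdifferentials: $p\in\partial_D^\mp\varphi(x)$ iff for all $w$, $\liminf_{h\downarrow0,w'\to w}\frac{\varphi(x+hw')-\varphi(x)}{h}\ge pw$ (resp. $\limsup\ldots\le pw$). $(\varphi,\overline{H})$, $\varphi$ continuous, $\overline{H}\in\mathbb{R}$, is a viscosity solution if $H(x,-p)\le\overline{H}$ for all $p\in\partial_D^+\varphi(x)$ and $H(x,-p)\ge\overline{H}$ for all $p\in\partial_D^-\varphi(x)$, for all $x$. A controlled process on $[0,r]$ is $(x(\cdot),v(\cdot))$ with $v\in L^1([0,r];\mathbb{R}^d)$, $x\in C([0,r];\mathbb{T}^d)$, $x(s)=x(0)+\int_0^sv\,dt$. Lax–Oleinik: $T_r^+\phi(y)=\inf\{\phi(x(r))+\int_0^rL(x(t),v(t))dt:(x,v)$ controlled process on $[0,r]$, $x(0)=y\}$. Feedback: $\varphi_\varkappa(x)=\inf_v\{\varphi(x+v)+\frac{1}{2\varkappa^2}|v|^2\}$; $b_\varkappa[x]$ a chosen minimizer, $p_\varkappa[x]=\frac1{\varkappa^2}(-b_\varkappa[x])^\top$, $\mathbbm{v}_\varkappa[x]\in\operatorname{Argmax}_v[-p_\varkappa[x]v-L(x+b_\varkappa[x],v)]$. For a partition $\Delta=\{t_i\}_{i=0}^n$ of $[0,r]$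 with fineness $d(\Delta)=\max_i(t_{i+1}-t_i)$: $x_{y,\varkappa,r,\Delta}(0)=y$, and on $[t_i,t_{i+1})$, $v_{y,\varkappa,r,\Delta}(t)=\mathbbm{v}_\varkappa[x_{y,\varkappa,r,\Delta}(t_i)]$, $x_{y,\varkappa,r,\Delta}(t)=x_{y,\varkappa,r,\Delta}(t_i)+(t-t_i)\mathbbm{v}_\varkappa[x_{y,\varkappa,r,\Delta}(t_i)]$. *)

theory Defs
  imports "HOL-Analysis.Analysis"
begin

text \<open>The torus T^d = R^d / Z^d is modelled through its universal cover R^d = real^'d:
  functions on T^d are Z^d-periodic functions on R^d, and translation x+v is vector addition.\<close>

definition zvec :: "real^'d \<Rightarrow> bool" where
  "zvec k \<longleftrightarrow> (\<forall>i. k $ i \<in> \<int>)"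

definition periodic :: "(real^'d \<Rightarrow> 'b) \<Rightarrow> bool" where
  "periodic f \<longleftrightarrow> (\<forall>x k. zvec k \<longrightarrow> f (x + k) = f x)"

definition hamiltonian :: "(real^'d \<Rightarrow> real^'d \<Rightarrow> real) \<Rightarrow> real^'d \<Rightarrow> real^'d \<Rightarrow> real" where
  "hamiltonian L x p = (SUP v. p \<bullet> v - L x v)"

definition hadamard_subdiff :: "(real^'d \<Rightarrow> real) \<Rightarrow> real^'d \<Rightarrow> (real^'d) set" where
  "hadamard_subdiff \<phi> x = {p. \<forall>w.
      Liminf (at_right 0 \<times>\<^sub>F nhds w) (\<lambda>(h, w'). ereal ((\<phi> (x + h *\<^sub>R w') - \<phi> x) / h))
        \<ge> ereal (p \<bullet> w)}"

definition hadamard_superdiff :: "(real^'d \<Rightarrow> real) \<Rightarrow> real^'d \<Rightarrow> (real^'d) set" where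
  "hadamard_superdiff \<phi> x = {p. \<forall>w.
      Limsup (at_right 0 \<times>\<^sub>F nhds w) (\<lambda>(h, w'). ereal ((\<phi> (x + h *\<^sub>R w') - \<phi> x) / h))
        \<le> ereal (p \<bullet> w)}"

definition viscosity_solution ::
  "(real^'d \<Rightarrow> real^'d \<Rightarrow> real) \<Rightarrow> (real^'d \<Rightarrow> real) \<Rightarrow> real \<Rightarrow> bool" where
  "viscosity_solution L \<phi> Hbar \<longleftrightarrow>
     continuous_on UNIV \<phi> \<and> periodic \<phi> \<and>
     (\<forall>x. \<forall>p \<in> hadamard_superdiff \<phi> x. hamiltonian L x (- p) \<le> Hbar) \<and>
     (\<forall>x. \<forall>p \<in> hadamard_subdiff \<phi> x. hamiltonian L x (- p) \<ge> Hbar)"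

text \<open>A controlled process from y is given by an L^1 control v on [0,r],
  with (lifted) trajectory x(s) = y + \<integral>_0^s v. Controls for which the running cost is not
  integrable have cost +\<infinity> (L is bounded below) and do not affect the infimum.\<close>
definition lax_oleinik ::
  "(real^'d \<Rightarrow> real^'d \<Rightarrow> real) \<Rightarrow> real \<Rightarrow> (real^'d \<Rightarrow> real) \<Rightarrow> real^'d \<Rightarrow> ereal" where
  "lax_oleinik L r \<phi> y = Inf {ereal (\<phi> (y + integral {0..r} v)
        + integral {0..r} (\<lambda>t. L (y + integral {0..t} v) (v t))) | v.
        v absolutely_integrable_on {0..r} \<and>
        (\<lambda>t. L (y + integral {0..t} v) (v t)) absolutely_integrable_on {0..r}}"

definition is_partition :: "real \<Rightarrow> nat \<Rightarrow> (nat \<Rightarrow> real) \<Rightarrow> bool" where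
  "is_partition r n t \<longleftrightarrow> t 0 = 0 \<and> t n = r \<and> (\<forall>i<n. t i < t (Suc i))"

definition fineness :: "nat \<Rightarrow> (nat \<Rightarrow> real) \<Rightarrow> real" where
  "fineness n t = Max {t (Suc i) - t i | i. i < n}"

primrec knots :: "(real^'d \<Rightarrow> real^'d) \<Rightarrow> real^'d \<Rightarrow> (nat \<Rightarrow> real) \<Rightarrow> nat \<Rightarrow> real^'d" where
  "knots F y t 0 = y"
| "knots F y t (Suc i) = knots F y t i + (t (Suc i) - t i) *\<^sub>R F (knots F y t i)"

text \<open>Index i with s \<in> [t_i, t_{i+1}) (and i = n-1 for s = r).\<close>
definition seg_index :: "nat \<Rightarrow> (nat \<Rightarrow> real) \<Rightarrow> real \<Rightarrow> nat" where
  "seg_index n t s = Max {i. i < n \<and> t i \<le> s}"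

definition feedback_v :: "(real^'d \<Rightarrow> real^'d) \<Rightarrow> real^'d \<Rightarrow> nat \<Rightarrow> (nat \<Rightarrow> real) \<Rightarrow> real \<Rightarrow> real^'d" where
  "feedback_v F y n t s = F (knots F y t (seg_index n t s))"

definition feedback_x :: "(real^'d \<Rightarrow> real^'d) \<Rightarrow> real^'d \<Rightarrow> nat \<Rightarrow> (nat \<Rightarrow> real) \<Rightarrow> real \<Rightarrow> real^'d" where
  "feedback_x F y n t s = knots F y t (seg_index n t s)
      + (s - t (seg_index n t s)) *\<^sub>R F (knots F y t (seg_index n t s))"

definition feedback_cost ::
  "(real^'d \<Rightarrow> real^'d \<Rightarrow> real) \<Rightarrow> (real^'d \<Rightarrow> real) \<Rightarrow> (real^'d \<Rightarrow> real^'d)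
     \<Rightarrow> real^'d \<Rightarrow> real \<Rightarrow> nat \<Rightarrow> (nat \<Rightarrow> real) \<Rightarrow> real" where
  "feedback_cost L \<phi> F y r n t = \<phi> (feedback_x F y n t r)
      + integral {0..r} (\<lambda>s. L (feedback_x F y n t s) (feedback_v F y n t s))"

definition limsup_fine :: "real \<Rightarrow> (nat \<Rightarrow> (nat \<Rightarrow> real) \<Rightarrow> real) \<Rightarrow> ereal" where
  "limsup_fine r f = (INF \<rho>\<in>{0<..}. Sup {ereal (f n t) | n t. is_partition r n t \<and> fineness n t < \<rho>})"

end

theory Submission
  imports Defs
begin

(* A viscosity solution \<phi> is Lipschitz: the subsolution inequality and the superlinearity of L
   bound all Hadamard supergradients, while at a maximum point y /= x0 of \<phi>(y) - K|y - x0| the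
   vector K(y - x0)/|y - x0| is a supergradient.

   Both inequalities are proved by regularising \<phi> at scale \<kappa>.  If b minimises
   \<phi>(x + w) + |w|^2/(2\<kappa>^2), then -b/\<kappa>^2 is a subgradient of \<phi> at x + b and |b| <= 2\<kappa>^2 Lip(\<phi>);
   maximisers of the sup-convolution \<phi>(x + w) - |w|^2/(2\<kappa>^2) give supergradients in the same way.

   Lower bound T_r^+\<phi> >= \<phi> - r Hbar: along a controlled path X the sup-convolution S satisfies
   S(X t') >= S(X t) - int_t^t' (L + Hbar + \<epsilon>) - |X t' - X t|^2/(2\<kappa>^2), because the
   subsolution inequality holds at the point X t + b next to the path and H depends continuously
   on x; on a fine partition the quadratic errors add up to at most \<epsilon>.

   Upper bound: along the feedback trajectory the inf-convolution decreases on a step of length h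
   by at least h (Hbar + L) - O(h^2/\<kappa>^2), by the supersolution inequality at x + b and the
   choice of the velocity as a maximiser of the Hamiltonian there.  Summing gives the estimate on
   the feedback cost, and evaluating it on one fine partition gives T_r^+\<phi> <= \<phi> - r Hbar. *)

lemma exists_integer_shift_in_unit_box:
  fixes x :: "real^'d"
  obtains k where "zvec k" "x - k \<in> cbox 0 1"
proof (rule that)
  show "zvec (\<chi> i. of_int \<lfloor>x $ i\<rfloor>)" unfolding zvec_def by auto
  show "x - (\<chi> i. of_int \<lfloor>x $ i\<rfloor>) \<in> cbox 0 1"
    unfolding mem_box_cart by (auto simp: of_int_floor_le) (smt (verit) real_of_int_floor_add_one_gt)
qed

lemma periodic_diff: "periodic f \<Longrightarrow> zvec k \<Longrightarrow> f (x - k) = f x"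
  unfolding periodic_def by (metis diff_add_cancel)

lemma periodic_continuous_bounded:
  fixes f :: "real^'d \<Rightarrow> 'b::real_normed_vector"
  assumes "continuous_on UNIV f" "periodic f"
  obtains B where "\<And>x. norm (f x) \<le> B"
proof -
  have "compact (f ` cbox 0 1)"
    by (rule compact_continuous_image) (auto intro: continuous_on_subset[OF assms(1)])
  then obtain B where B: "\<And>y. y \<in> f ` cbox 0 1 \<Longrightarrow> norm y \<le> B"
    using compact_imp_bounded bounded_iff by metis
  have "norm (f x) \<le> B" for x
  proof -
    obtain k where k: "zvec k" "x - k \<in> cbox 0 1" by (rule exists_integer_shift_in_unit_box)
    then show ?thesis using B[OF imageI[OF k(2)]] periodic_diff[OF assms(2) k(1)] by simp
  qed
  then show thesis by (rule that)
qed

section \<open>Hadamard semidifferentials\<close>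

lemma eventually_hadamard_filter_pos: "\<forall>\<^sub>F (h, w') in at_right (0::real) \<times>\<^sub>F nhds w. 0 < h"
  by (subst eventually_prod1) (auto simp: eventually_at_right_less)

lemma tendsto_hadamard_quadratic:
  fixes q w :: "'a::real_inner"
  shows "((\<lambda>(h, w'). ereal (q \<bullet> w' + c * h * (norm w')\<^sup>2)) \<longlongrightarrow> ereal (q \<bullet> w))
    (at_right (0::real) \<times>\<^sub>F nhds w)"
proof -
  have "(fst \<longlongrightarrow> 0) (at_right (0::real) \<times>\<^sub>F nhds w)"
    by (rule filterlim_mono[OF filterlim_fst at_within_le_nhds order_refl])
  moreover have "(snd \<longlongrightarrow> w) (at_right (0::real) \<times>\<^sub>F nhds w)" by (rule filterlim_snd)
  ultimately have "((\<lambda>p. q \<bullet> snd p + c * fst p * (norm (snd p))\<^sup>2) \<longlongrightarrow> q \<bullet> w + c * 0 * (norm w)\<^sup>2)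
      (at_right 0 \<times>\<^sub>F nhds w)"
    by (intro tendsto_intros)
  then show ?thesis unfolding split_beta' lim_ereal by simp
qed

lemma superdiff_of_quadratic_upper_bound:
  fixes \<phi> :: "real^'d \<Rightarrow> real"
  assumes "\<And>u. \<phi> (z + u) \<le> \<phi> z + q \<bullet> u + c * (norm u)\<^sup>2"
  shows "q \<in> hadamard_superdiff \<phi> z"
  unfolding hadamard_superdiff_def
proof clarify
  fix w :: "real^'d"
  let ?F = "at_right (0::real) \<times>\<^sub>F nhds w"
  have "Limsup ?F (\<lambda>(h, w'). ereal ((\<phi> (z + h *\<^sub>R w') - \<phi> z) / h))
      \<le> Limsup ?F (\<lambda>(h, w'). ereal (q \<bullet> w' + c * h * (norm w')\<^sup>2))"
  proof (rule Limsup_mono, rule eventually_mono[OF eventually_hadamard_filter_pos], clarsimp)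
    fix h :: real and w' :: "real^'d" assume h: "0 < h"
    have "\<phi> (z + h *\<^sub>R w') - \<phi> z \<le> h * (q \<bullet> w' + c * h * (norm w')\<^sup>2)"
      using assms[of "h *\<^sub>R w'"] h by (simp add: algebra_simps power2_eq_square)
    then show "(\<phi> (z + h *\<^sub>R w') - \<phi> z) / h \<le> q \<bullet> w' + c * h * (norm w')\<^sup>2"
      using h by (simp add: divide_le_eq mult.commute)
  qed
  also have "\<dots> = ereal (q \<bullet> w)"
    by (rule lim_imp_Limsup[OF _ tendsto_hadamard_quadratic]) (simp add: prod_filter_eq_bot)
  finally show "Limsup ?F (\<lambda>(h, w'). ereal ((\<phi> (z + h *\<^sub>R w') - \<phi> z) / h)) \<le> ereal (q \<bullet> w)" .
qed

lemma subdiff_of_quadratic_lower_bound: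
  fixes \<phi> :: "real^'d \<Rightarrow> real"
  assumes "\<And>u. \<phi> z + q \<bullet> u - c * (norm u)\<^sup>2 \<le> \<phi> (z + u)"
  shows "q \<in> hadamard_subdiff \<phi> z"
  unfolding hadamard_subdiff_def
proof clarify
  fix w :: "real^'d"
  let ?F = "at_right (0::real) \<times>\<^sub>F nhds w"
  have "ereal (q \<bullet> w) = Liminf ?F (\<lambda>(h, w'). ereal (q \<bullet> w' + (- c) * h * (norm w')\<^sup>2))"
    by (rule lim_imp_Liminf[OF _ tendsto_hadamard_quadratic, symmetric]) (simp add: prod_filter_eq_bot)
  also have "\<dots> \<le> Liminf ?F (\<lambda>(h, w'). ereal ((\<phi> (z + h *\<^sub>R w') - \<phi> z) / h))"
  proof (rule Liminf_mono, rule eventually_mono[OF eventually_hadamard_filter_pos], clarsimp)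
    fix h :: real and w' :: "real^'d" assume h: "0 < h"
    have "h * (q \<bullet> w' - c * h * (norm w')\<^sup>2) \<le> \<phi> (z + h *\<^sub>R w') - \<phi> z"
      using assms[of "h *\<^sub>R w'"] h by (simp add: algebra_simps power2_eq_square)
    then show "q \<bullet> w' - c * h * (norm w')\<^sup>2 \<le> (\<phi> (z + h *\<^sub>R w') - \<phi> z) / h"
      using h by (simp add: le_divide_eq mult.commute)
  qed
  finally show "ereal (q \<bullet> w) \<le> Liminf ?F (\<lambda>(h, w'). ereal ((\<phi> (z + h *\<^sub>R w') - \<phi> z) / h))" .
qed

lemma norm_add_le_quadratic:
  fixes a u :: "'a::real_inner"
  assumes "a \<noteq> 0"
  shows "norm (a + u) \<le> norm a + (a /\<^sub>R norm a) \<bullet> u + (norm u)\<^sup>2 / (2 * norm a)"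
proof -
  define n where "n = norm a"
  define s where "s = (a \<bullet> u) / n"
  have n: "0 < n" using assms unfolding n_def by simp
  have "\<bar>a \<bullet> u\<bar> \<le> n * norm u" unfolding n_def by (rule Cauchy_Schwarz_ineq2)
  then have "- norm u \<le> s" unfolding s_def using n by (simp add: field_simps abs_le_iff)
  moreover have "0 \<le> (n\<^sup>2 + (n - norm u)\<^sup>2) / (2 * n)" using n by simp
  moreover have "(n\<^sup>2 + (n - norm u)\<^sup>2) / (2 * n) = n - norm u + (norm u)\<^sup>2 / (2 * n)"
    using n by (simp add: field_simps power2_eq_square)
  ultimately have pos: "0 \<le> n + s + (norm u)\<^sup>2 / (2 * n)" by linarith
  have "(norm (a + u))\<^sup>2 = n\<^sup>2 + 2 * n * s + (norm u)\<^sup>2"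
    using n unfolding n_def s_def
    by (simp add: power2_norm_eq_inner inner_add_left inner_add_right inner_commute)
  also have "\<dots> \<le> (n + s + (norm u)\<^sup>2 / (2 * n))\<^sup>2"
  proof -
    have "(n + s + (norm u)\<^sup>2 / (2 * n))\<^sup>2 = n\<^sup>2 + 2 * n * s + (norm u)\<^sup>2 + (s + (norm u)\<^sup>2 / (2 * n))\<^sup>2"
      using n by (simp add: field_simps power2_eq_square)
    then show ?thesis by simp
  qed
  finally have "norm (a + u) \<le> n + s + (norm u)\<^sup>2 / (2 * n)"
    using pos by (rule power2_le_imp_le)
  moreover have "(a /\<^sub>R norm a) \<bullet> u = s" unfolding s_def n_def by (simp add: divide_inverse mult.commute)
  ultimately show ?thesis unfolding n_def by simp
qed

lemma lipschitz_of_bounded_superdiff: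
  fixes \<phi> :: "real^'d \<Rightarrow> real"
  assumes cont: "continuous_on UNIV \<phi>" and bounded: "\<And>x. \<bar>\<phi> x\<bar> \<le> B"
    and superdiff: "\<And>x p. p \<in> hadamard_superdiff \<phi> x \<Longrightarrow> norm p \<le> K0"
    and K: "K0 < K" "0 < K"
  shows "\<phi> x - \<phi> x0 \<le> K * norm (x - x0)"
proof -
  define g where "g y = \<phi> y - K * norm (y - x0)" for y
  obtain x1 where x1: "\<And>y. g y \<le> g x1"
  proof -
    define R where "R = 2 * B / K + 1"
    have "0 \<le> B" using bounded[of x0] by simp
    then have R: "0 \<le> R" "K * R = 2 * B + K" unfolding R_def using K by (auto simp: field_simps)
    have "continuous_on (cball x0 R) g"
      unfolding g_def by (intro continuous_intros continuous_on_subset[OF cont]) auto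
    then obtain x1 where x1: "\<And>y. y \<in> cball x0 R \<Longrightarrow> g y \<le> g x1"
      using continuous_attains_sup[OF compact_cball] R(1) by (metis cball_eq_empty not_less)
    have "g y \<le> g x1" for y
    proof (cases "y \<in> cball x0 R")
      case False
      then have "K * R \<le> K * norm (y - x0)" using K by (simp add: dist_norm norm_minus_commute)
      then have "g y < g x0" unfolding g_def using bounded[of y] bounded[of x0] R(2) K by simp
      then show ?thesis using x1[of x0] R(1) by simp
    qed (rule x1)
    then show thesis by (rule that)
  qed
  have "x1 = x0"
  proof (rule ccontr)
    assume "x1 \<noteq> x0"
    define a where "a = x1 - x0"
    have a: "a \<noteq> 0" using \<open>x1 \<noteq> x0\<close> unfolding a_def by simp
    have "K *\<^sub>R (a /\<^sub>R norm a) \<in> hadamard_superdiff \<phi> x1"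
    proof (rule superdiff_of_quadratic_upper_bound[where c = "K / (2 * norm a)"])
      fix u
      have "\<phi> (x1 + u) \<le> \<phi> x1 + K * (norm (a + u) - norm a)"
        using x1[of "x1 + u"] unfolding g_def a_def by (simp add: algebra_simps)
      also have "\<dots> \<le> \<phi> x1 + K * ((a /\<^sub>R norm a) \<bullet> u + (norm u)\<^sup>2 / (2 * norm a))"
        using norm_add_le_quadratic[OF a, of u] K by (simp add: mult_left_mono)
      finally show "\<phi> (x1 + u) \<le> \<phi> x1 + (K *\<^sub>R (a /\<^sub>R norm a)) \<bullet> u + K / (2 * norm a) * (norm u)\<^sup>2"
        by (simp add: algebra_simps)
    qed
    from superdiff[OF this] show False using a K by (simp add: field_simps)
  qed
  then show ?thesis using x1[of x] unfolding g_def by simp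
qed

section \<open>Quadratic inf-convolution\<close>

(* Minimisers for -\<psi> are the maximisers of the sup-convolution \<psi>(x + w) - |w|^2/(2\<kappa>^2). *)
definition inf_conv_minimizer :: "real \<Rightarrow> ('a::real_normed_vector \<Rightarrow> real) \<Rightarrow> 'a \<Rightarrow> 'a \<Rightarrow> bool" where
  "inf_conv_minimizer \<kappa> \<psi> x b \<longleftrightarrow>
     (\<forall>w. \<psi> (x + b) + (norm b)\<^sup>2 / (2 * \<kappa>\<^sup>2) \<le> \<psi> (x + w) + (norm w)\<^sup>2 / (2 * \<kappa>\<^sup>2))"

lemma inf_conv_minimizer_exists:
  fixes \<psi> :: "'a::euclidean_space \<Rightarrow> real"
  assumes cont: "continuous_on UNIV \<psi>" and bounded: "\<And>x. \<bar>\<psi> x\<bar> \<le> B" and \<kappa>: "\<kappa> \<noteq> 0"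
  obtains b where "\<And>x. inf_conv_minimizer \<kappa> \<psi> x (b x)"
proof -
  define R where "R = 2 * \<bar>\<kappa>\<bar> * (B + 1)"
  have B: "0 \<le> B" using bounded[of 0] by simp
  have "R\<^sup>2 = 4 * \<kappa>\<^sup>2 * (B + 1)\<^sup>2" unfolding R_def by (simp add: power_mult_distrib)
  then have R: "0 \<le> R" "R\<^sup>2 / (2 * \<kappa>\<^sup>2) = 2 * (B + 1)\<^sup>2"
    using B \<kappa> unfolding R_def by auto
  have "\<exists>b. inf_conv_minimizer \<kappa> \<psi> x b" for x
  proof -
    define g where "g w = \<psi> (x + w) + (norm w)\<^sup>2 / (2 * \<kappa>\<^sup>2)" for w
    have "continuous_on (cball 0 R) g"
      unfolding g_def by (intro continuous_intros continuous_on_compose2[OF cont]) (use \<kappa> in auto)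
    then obtain b where b: "\<And>w. w \<in> cball 0 R \<Longrightarrow> g b \<le> g w"
      using continuous_attains_inf[OF compact_cball] R(1) by (metis cball_eq_empty not_less)
    have "g b \<le> g w" for w
    proof (cases "w \<in> cball 0 R")
      case False
      then have "R\<^sup>2 \<le> (norm w)\<^sup>2" using R(1) by (simp add: power_mono)
      then have "2 * (B + 1)\<^sup>2 \<le> (norm w)\<^sup>2 / (2 * \<kappa>\<^sup>2)"
        using R(2) by (metis divide_right_mono zero_le_numeral mult_nonneg_nonneg zero_le_power2)
      moreover have "2 * B + 2 \<le> 2 * (B + 1)\<^sup>2" using B by (simp add: power2_eq_square algebra_simps)
      ultimately have "g 0 \<le> g w" unfolding g_def using bounded[of "x + w"] bounded[of x] by simp
      then show ?thesis using b[of 0] R(1) by simp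
    qed (rule b)
    then show ?thesis unfolding inf_conv_minimizer_def g_def by blast
  qed
  then have "inf_conv_minimizer \<kappa> \<psi> x (SOME b. inf_conv_minimizer \<kappa> \<psi> x b)" for x
    by (rule someI_ex)
  then show thesis by (rule that)
qed

lemma inf_conv_minimizer_value_bounds:
  assumes "inf_conv_minimizer \<kappa> \<psi> x b" and lip: "\<psi> x - \<psi> (x + b) \<le> K * norm b"
  shows "\<psi> x - K * norm b \<le> \<psi> (x + b) + (norm b)\<^sup>2 / (2 * \<kappa>\<^sup>2)"
    and "\<psi> (x + b) + (norm b)\<^sup>2 / (2 * \<kappa>\<^sup>2) \<le> \<psi> x"
proof -
  have "0 \<le> (norm b)\<^sup>2 / (2 * \<kappa>\<^sup>2)" by simp
  then show "\<psi> x - K * norm b \<le> \<psi> (x + b) + (norm b)\<^sup>2 / (2 * \<kappa>\<^sup>2)" using lip by linarith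
  show "\<psi> (x + b) + (norm b)\<^sup>2 / (2 * \<kappa>\<^sup>2) \<le> \<psi> x"
    using assms(1) unfolding inf_conv_minimizer_def by (metis add_0 add.right_neutral norm_zero
        power_zero_numeral div_0)
qed

lemma inf_conv_minimizer_norm_le:
  assumes "inf_conv_minimizer \<kappa> \<psi> x b" "\<kappa> \<noteq> 0"
    and lip: "\<psi> x - \<psi> (x + b) \<le> K * norm b" and "0 \<le> K"
  shows "norm b \<le> 2 * \<kappa>\<^sup>2 * K"
proof (cases "b = 0")
  case False
  have "\<psi> (x + b) + (norm b)\<^sup>2 / (2 * \<kappa>\<^sup>2) \<le> \<psi> x"
    by (rule inf_conv_minimizer_value_bounds(2)[OF assms(1) lip])
  then have "(norm b)\<^sup>2 / (2 * \<kappa>\<^sup>2) \<le> K * norm b" using lip by linarith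
  then have "(norm b)\<^sup>2 \<le> K * norm b * (2 * \<kappa>\<^sup>2)"
    using assms(2) by (simp add: pos_divide_le_eq)
  then have "norm b * norm b \<le> (2 * \<kappa>\<^sup>2 * K) * norm b" by (simp add: power2_eq_square algebra_simps)
  then show ?thesis using False by simp
qed (use assms in simp)

lemma inf_conv_minimizer_shift:
  fixes b b' d :: "'a::real_inner"
  assumes "inf_conv_minimizer \<kappa> \<psi> (x + d) b'" "\<kappa> \<noteq> 0"
  shows "\<psi> (x + d + b') + (norm b')\<^sup>2 / (2 * \<kappa>\<^sup>2)
    \<le> \<psi> (x + b) + (norm b)\<^sup>2 / (2 * \<kappa>\<^sup>2) - (b \<bullet> d) / \<kappa>\<^sup>2 + (norm d)\<^sup>2 / (2 * \<kappa>\<^sup>2)"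
proof -
  have "\<psi> (x + d + b') + (norm b')\<^sup>2 / (2 * \<kappa>\<^sup>2) \<le> \<psi> (x + d + (b - d)) + (norm (b - d))\<^sup>2 / (2 * \<kappa>\<^sup>2)"
    using assms(1) unfolding inf_conv_minimizer_def by blast
  also have "(norm (b - d))\<^sup>2 = (norm b)\<^sup>2 - 2 * (b \<bullet> d) + (norm d)\<^sup>2"
    by (simp add: power2_norm_eq_inner inner_diff_left inner_diff_right inner_commute)
  also have "((norm b)\<^sup>2 - 2 * (b \<bullet> d) + (norm d)\<^sup>2) / (2 * \<kappa>\<^sup>2)
      = (norm b)\<^sup>2 / (2 * \<kappa>\<^sup>2) - (b \<bullet> d) / \<kappa>\<^sup>2 + (norm d)\<^sup>2 / (2 * \<kappa>\<^sup>2)"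
    by (simp add: add_divide_distrib diff_divide_distrib)
  finally show ?thesis by (simp add: add.assoc)
qed

lemma inf_conv_minimizer_subdiff:
  fixes \<psi> :: "real^'d \<Rightarrow> real"
  assumes "inf_conv_minimizer \<kappa> \<psi> x b" "\<kappa> \<noteq> 0"
  shows "(1 / \<kappa>\<^sup>2) *\<^sub>R (- b) \<in> hadamard_subdiff \<psi> (x + b)"
proof (rule subdiff_of_quadratic_lower_bound[where c = "1 / (2 * \<kappa>\<^sup>2)"])
  fix u
  have "\<psi> (x + b) + (norm b)\<^sup>2 / (2 * \<kappa>\<^sup>2) \<le> \<psi> (x + b + u) + (norm (b + u))\<^sup>2 / (2 * \<kappa>\<^sup>2)"
    using assms(1) unfolding inf_conv_minimizer_def by (simp add: add.assoc)
  also have "(norm (b + u))\<^sup>2 = (norm b)\<^sup>2 + 2 * (b \<bullet> u) + (norm u)\<^sup>2"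
    by (simp add: power2_norm_eq_inner inner_add_left inner_add_right inner_commute)
  also have "((norm b)\<^sup>2 + 2 * (b \<bullet> u) + (norm u)\<^sup>2) / (2 * \<kappa>\<^sup>2)
      = (norm b)\<^sup>2 / (2 * \<kappa>\<^sup>2) + (b \<bullet> u) / \<kappa>\<^sup>2 + (norm u)\<^sup>2 / (2 * \<kappa>\<^sup>2)"
    by (simp add: add_divide_distrib)
  finally show "\<psi> (x + b) + ((1 / \<kappa>\<^sup>2) *\<^sub>R (- b)) \<bullet> u - 1 / (2 * \<kappa>\<^sup>2) * (norm u)\<^sup>2 \<le> \<psi> (x + b + u)"
    by simp
qed

lemma inf_conv_minimizer_neg_superdiff:
  fixes \<psi> :: "real^'d \<Rightarrow> real"
  assumes "inf_conv_minimizer \<kappa> (\<lambda>z. - \<psi> z) x b" "\<kappa> \<noteq> 0"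
  shows "(1 / \<kappa>\<^sup>2) *\<^sub>R b \<in> hadamard_superdiff \<psi> (x + b)"
proof (rule superdiff_of_quadratic_upper_bound[where c = "1 / (2 * \<kappa>\<^sup>2)"])
  fix u
  have "- \<psi> (x + b) + (norm b)\<^sup>2 / (2 * \<kappa>\<^sup>2) \<le> - \<psi> (x + b + u) + (norm (b + u))\<^sup>2 / (2 * \<kappa>\<^sup>2)"
    using assms(1) unfolding inf_conv_minimizer_def by (simp add: add.assoc)
  also have "(norm (b + u))\<^sup>2 = (norm b)\<^sup>2 + 2 * (b \<bullet> u) + (norm u)\<^sup>2"
    by (simp add: power2_norm_eq_inner inner_add_left inner_add_right inner_commute)
  also have "((norm b)\<^sup>2 + 2 * (b \<bullet> u) + (norm u)\<^sup>2) / (2 * \<kappa>\<^sup>2)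
      = (norm b)\<^sup>2 / (2 * \<kappa>\<^sup>2) + (b \<bullet> u) / \<kappa>\<^sup>2 + (norm u)\<^sup>2 / (2 * \<kappa>\<^sup>2)"
    by (simp add: add_divide_distrib)
  finally show "\<psi> (x + b + u) \<le> \<psi> (x + b) + ((1 / \<kappa>\<^sup>2) *\<^sub>R b) \<bullet> u + 1 / (2 * \<kappa>\<^sup>2) * (norm u)\<^sup>2"
    by simp
qed

lemma exists_small_scale:
  fixes K a e :: real
  assumes K: "0 < K" and "0 < a" "0 < e"
  obtains \<kappa>0 where "0 < \<kappa>0"
    "\<And>\<kappa>. \<bar>\<kappa>\<bar> \<le> \<kappa>0 \<Longrightarrow> 2 * \<kappa>\<^sup>2 * K \<le> a \<and> K * (2 * \<kappa>\<^sup>2 * K) \<le> e"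
proof -
  define m where "m = min a (e / K)"
  have m: "0 < m" using assms unfolding m_def by simp
  have "m \<le> e / K" unfolding m_def by (rule min.cobounded2)
  then have Km: "K * m \<le> e" using K by (simp add: pos_le_divide_eq mult.commute)
  have "2 * \<kappa>\<^sup>2 * K \<le> a \<and> K * (2 * \<kappa>\<^sup>2 * K) \<le> e" if "\<bar>\<kappa>\<bar> \<le> sqrt (m / (2 * K))" for \<kappa>
  proof -
    have "\<bar>\<kappa>\<bar>\<^sup>2 \<le> (sqrt (m / (2 * K)))\<^sup>2" using power_mono[OF that abs_ge_zero] .
    then have "\<kappa>\<^sup>2 \<le> m / (2 * K)" using m K by simp
    then have "2 * \<kappa>\<^sup>2 * K \<le> m" using K by (simp add: le_divide_eq mult_ac)
    moreover have "m \<le> a" unfolding m_def by (rule min.cobounded1)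
    moreover have "K * (2 * \<kappa>\<^sup>2 * K) \<le> K * m" using \<open>2 * \<kappa>\<^sup>2 * K \<le> m\<close> K by simp
    ultimately show ?thesis using Km by linarith
  qed
  moreover have "0 < sqrt (m / (2 * K))" using m K by simp
  ultimately show thesis by (rule that[rotated])
qed

section \<open>Partitions, feedback trajectories and path estimates\<close>

lemma sum_telescope_le:
  fixes f g :: "nat \<Rightarrow> 'a::ordered_ab_group_add"
  assumes "\<And>i. i < n \<Longrightarrow> f (Suc i) \<le> f i + g i"
  shows "f n \<le> f 0 + (\<Sum>i<n. g i)"
  using assms
proof (induction n)
  case (Suc n)
  have "f (Suc n) \<le> f n + g n" using Suc.prems by simp
  also have "\<dots> \<le> f 0 + (\<Sum>i<n. g i) + g n" using Suc by (simp add: add_right_mono)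
  finally show ?case by (simp add: add.assoc)
qed simp

lemma has_integral_ge_of_inner_bound:
  fixes v :: "real \<Rightarrow> 'a::euclidean_space"
  assumes v: "(v has_integral \<Delta>) {a..c}" and "a \<le> c" and l: "(l has_integral I) {a..c}"
    and bound: "\<And>s. s \<in> {a..c} \<Longrightarrow> q \<bullet> v s - l s \<le> E"
  shows "q \<bullet> \<Delta> - (c - a) * E \<le> I"
proof -
  have "((\<lambda>s. q \<bullet> v s) has_integral q \<bullet> \<Delta>) {a..c}"
    using has_integral_linear[OF v bounded_linear_inner_right] by (simp add: o_def)
  from has_integral_diff[OF this has_integral_const_real[of E a c]]
  have "((\<lambda>s. q \<bullet> v s - E) has_integral q \<bullet> \<Delta> - (c - a) * E) {a..c}" using \<open>a \<le> c\<close> by simp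
  then show ?thesis by (rule has_integral_le[OF _ l]) (use bound in force)
qed

lemma partition_less: "is_partition r n t \<Longrightarrow> j < k \<Longrightarrow> k \<le> n \<Longrightarrow> t j < t k"
proof (induction k)
  case (Suc k)
  then have "t k < t (Suc k)" unfolding is_partition_def by auto
  then show ?case using Suc by (cases "j = k") auto
qed simp

lemma partition_le: "is_partition r n t \<Longrightarrow> j \<le> k \<Longrightarrow> k \<le> n \<Longrightarrow> t j \<le> t k"
  using partition_less[of r n t j k] by (cases "j = k") auto

lemma partition_range: "is_partition r n t \<Longrightarrow> i \<le> n \<Longrightarrow> t i \<in> {0..r}"
  using partition_le[of r n t 0 i] partition_le[of r n t i n] unfolding is_partition_def by auto

lemma partition_nonempty: "is_partition r n t \<Longrightarrow> 0 < r \<Longrightarrow> 0 < n"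
  unfolding is_partition_def by (cases n) auto

lemma segment_le_fineness: "i < n \<Longrightarrow> t (Suc i) - t i \<le> fineness n t"
  unfolding fineness_def by (rule Max_ge) auto

lemma fineness_pos: "is_partition r n t \<Longrightarrow> 0 < r \<Longrightarrow> 0 < fineness n t"
  using segment_le_fineness[of 0 n t] partition_nonempty[of r n t]
  unfolding is_partition_def by fastforce

lemma exists_partition_fineness_less:
  assumes r: "0 < r" and \<rho>: "0 < \<rho>"
  obtains n t where "is_partition r n t" "fineness n t < \<rho>"
proof -
  define n :: nat where "n = nat \<lceil>r / \<rho>\<rceil> + 1"
  define t where "t i = r * i / n" for i :: nat
  have n: "0 < n" "r / \<rho> < n" unfolding n_def by linarith+
  have step: "t (Suc i) - t i = r / n" for i
    unfolding t_def by (simp add: algebra_simps add_divide_distrib)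
  have "0 < r / n" using r n by simp
  then have "t i < t (Suc i)" for i using step[of i] by linarith
  moreover have "t 0 = 0" "t n = r" using n(1) by (simp_all add: t_def)
  ultimately have "is_partition r n t" unfolding is_partition_def by simp
  moreover have "{t (Suc i) - t i | i. i < n} = {r / n}" unfolding step using n(1) by auto
  then have "fineness n t = r / n" unfolding fineness_def by simp
  moreover have "r / n < \<rho>" using n \<rho> by (simp add: divide_less_eq mult.commute)
  ultimately show thesis by (intro that) auto
qed

lemma exists_partition_small_oscillation:
  fixes X :: "real \<Rightarrow> 'a::metric_space"
  assumes "continuous_on {0..r} X" "0 < r" "0 < \<eta>"
  obtains n t where "is_partition r n t"
    "\<And>i s. i < n \<Longrightarrow> s \<in> {t i..t (Suc i)} \<Longrightarrow> dist (X s) (X (t i)) < \<eta>"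
proof -
  obtain d where d: "0 < d" and uc: "\<And>s s'. s \<in> {0..r} \<Longrightarrow> s' \<in> {0..r} \<Longrightarrow> dist s' s < d \<Longrightarrow> dist (X s') (X s) < \<eta>"
    using compact_uniformly_continuous[OF assms(1) compact_Icc] assms(3)
    unfolding uniformly_continuous_on_def by metis
  obtain n t where part: "is_partition r n t" and fine: "fineness n t < d"
    by (rule exists_partition_fineness_less[OF assms(2) d])
  have "dist (X s) (X (t i)) < \<eta>" if "i < n" "s \<in> {t i..t (Suc i)}" for i s
  proof (rule uc)
    show "t i \<in> {0..r}" using partition_range[OF part] that by simp
    show "s \<in> {0..r}" using partition_range[OF part, of i] partition_range[OF part, of "Suc i"] that by auto
    show "dist s (t i) < d" using segment_le_fineness[of i n t] fine that by (auto simp: dist_real_def)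
  qed
  with part show thesis by (rule that)
qed

lemma seg_index_eq:
  assumes part: "is_partition r n t" and i: "i < n" and s: "t i \<le> s" "s < t (Suc i)"
  shows "seg_index n t s = i"
proof -
  have "{j. j < n \<and> t j \<le> s} = {..i}"
  proof (intro set_eqI iffI)
    fix j assume "j \<in> {j. j < n \<and> t j \<le> s}"
    then show "j \<in> {..i}"
      using partition_le[OF part, of "Suc i" j] s by (cases "Suc i \<le> j") auto
  next
    fix j assume "j \<in> {..i}"
    then show "j \<in> {j. j < n \<and> t j \<le> s}" using partition_le[OF part, of j i] i s by auto
  qed
  then show ?thesis unfolding seg_index_def by (simp, intro Max_eqI) auto
qed

lemma seg_index_end:
  assumes part: "is_partition r n t" and n: "0 < n"
  shows "seg_index n t r = n - 1"
proof -
  have "{j. j < n \<and> t j \<le> r} = {..<n}"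
    using partition_le[OF part, of _ n] part unfolding is_partition_def by auto
  then show ?thesis unfolding seg_index_def using n by simp (intro Max_eqI, auto)
qed

lemma seg_index_bounds:
  assumes part: "is_partition r n t" and r: "0 < r" and s: "0 \<le> s" "s \<le> r"
  shows "seg_index n t s < n" "t (seg_index n t s) \<le> s" "s \<le> t (Suc (seg_index n t s))"
proof -
  let ?A = "{j. j < n \<and> t j \<le> s}"
  define i where "i = seg_index n t s"
  have n: "0 < n" using partition_nonempty[OF part r] .
  have "0 \<in> ?A" using n s part unfolding is_partition_def by auto
  moreover have "finite ?A" by simp
  ultimately have iA: "i \<in> ?A" "\<And>j. j \<in> ?A \<Longrightarrow> j \<le> i"
    unfolding i_def seg_index_def using Max_in Max_ge by blast+
  have "s \<le> t (Suc i)"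
  proof (cases "Suc i < n")
    case True
    then show ?thesis using iA(2)[of "Suc i"] by fastforce
  next
    case False
    then have "Suc i = n" using iA(1) by simp
    then show ?thesis using s part unfolding is_partition_def by auto
  qed
  then show "seg_index n t s < n" "t (seg_index n t s) \<le> s" "s \<le> t (Suc (seg_index n t s))"
    using iA(1) unfolding i_def by auto
qed

lemma feedback_on_segment:
  assumes "is_partition r n t" "i < n" "t i \<le> s" "s < t (Suc i)"
  shows "feedback_x F y n t s = knots F y t i + (s - t i) *\<^sub>R F (knots F y t i)"
    and "feedback_v F y n t s = F (knots F y t i)"
  unfolding feedback_x_def feedback_v_def seg_index_eq[OF assms] by simp_all

lemma feedback_x_end:
  assumes part: "is_partition r n t" and r: "0 < r"
  shows "feedback_x F y n t r = knots F y t n"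
proof -
  obtain m where m: "n = Suc m" using partition_nonempty[OF part r] gr0_implies_Suc by blast
  show ?thesis
    unfolding feedback_x_def seg_index_end[OF part partition_nonempty[OF part r]]
    using m part unfolding is_partition_def by simp
qed

lemma knots_eq_sum: "knots F y t i = y + (\<Sum>j<i. (t (Suc j) - t j) *\<^sub>R F (knots F y t j))"
  by (induction i) auto

lemma has_integral_partition_sum:
  fixes f :: "real \<Rightarrow> 'a::banach"
  assumes "\<And>i. i < n \<Longrightarrow> t i \<le> t (Suc i)"
    and "\<And>i. i < n \<Longrightarrow> (f has_integral I i) {t i..t (Suc i)}"
  shows "(f has_integral (\<Sum>i<n. I i)) {t 0..t n}"
proof -
  have "t 0 \<le> t n \<and> (f has_integral (\<Sum>i<n. I i)) {t 0..t n}"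
    using assms
  proof (induction n)
    case (Suc n)
    then have IH: "t 0 \<le> t n" "(f has_integral (\<Sum>i<n. I i)) {t 0..t n}" by auto
    have "(f has_integral ((\<Sum>i<n. I i) + I n)) {t 0..t (Suc n)}"
      by (rule has_integral_combine[OF IH(1) _ IH(2)]) (use Suc.prems in auto)
    then show ?case using IH(1) Suc.prems(1)[of n] by (simp add: add.commute)
  qed (use has_integral_refl(1)[of f "t 0"] in simp)
  then show ?thesis ..
qed

lemma has_integral_continuous_on_except_right:
  fixes f :: "real \<Rightarrow> 'a::euclidean_space"
  assumes "continuous_on {a..b} h" "\<And>s. a \<le> s \<Longrightarrow> s < b \<Longrightarrow> f s = h s"
  shows "(f has_integral integral {a..b} h) {a..b}"
proof (rule has_integral_spike_finite[of "{b}"])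
  show "(h has_integral integral {a..b} h) {a..b}"
    using integrable_continuous_interval[OF assms(1)] by (simp add: has_integral_integral)
qed (use assms(2) in auto)

lemma piecewise_continuous_has_integral:
  fixes g :: "real \<Rightarrow> 'a::euclidean_space"
  assumes mono: "\<And>i. i < n \<Longrightarrow> t i \<le> t (Suc i)"
    and cont: "\<And>i. i < n \<Longrightarrow> continuous_on {t i..t (Suc i)} (c i)"
    and eq: "\<And>i s. i < n \<Longrightarrow> t i \<le> s \<Longrightarrow> s < t (Suc i) \<Longrightarrow> g s = c i s"
  shows "(g has_integral (\<Sum>i<n. integral {t i..t (Suc i)} (c i))) {t 0..t n}"
    and "g absolutely_integrable_on {t 0..t n}"
proof -
  show "(g has_integral (\<Sum>i<n. integral {t i..t (Suc i)} (c i))) {t 0..t n}"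
  proof (rule has_integral_partition_sum[where n = n and t = t, OF mono])
    fix i assume "i < n"
    then show "(g has_integral integral {t i..t (Suc i)} (c i)) {t i..t (Suc i)}"
      using cont eq by (intro has_integral_continuous_on_except_right) auto
  qed
  moreover have "((\<lambda>s. norm (g s)) has_integral
      (\<Sum>i<n. integral {t i..t (Suc i)} (\<lambda>s. norm (c i s)))) {t 0..t n}"
  proof (rule has_integral_partition_sum[where n = n and t = t, OF mono])
    fix i assume "i < n"
    then show "((\<lambda>s. norm (g s)) has_integral integral {t i..t (Suc i)} (\<lambda>s. norm (c i s))) {t i..t (Suc i)}"
      using cont eq by (intro has_integral_continuous_on_except_right continuous_intros) auto
  qed
  ultimately show "g absolutely_integrable_on {t 0..t n}"
    unfolding absolutely_integrable_on_def by blast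
qed

lemma feedback_v_has_integral:
  assumes part: "is_partition r n t" and r: "0 < r" and s: "0 \<le> s" "s \<le> r"
  shows "(feedback_v F y n t has_integral (feedback_x F y n t s - y)) {0..s}"
proof -
  define i where "i = seg_index n t s"
  define X where "X = knots F y t"
  have i: "i < n" "t i \<le> s" "s \<le> t (Suc i)" using seg_index_bounds[OF part r s] unfolding i_def by auto
  have mono: "t j \<le> t (Suc j)" if "j < i" for j
    using partition_le[OF part, of j "Suc j"] that i(1) by simp
  have "(feedback_v F y n t has_integral (\<Sum>j<i. integral {t j..t (Suc j)} (\<lambda>s. F (X j)))) {t 0..t i}"
  proof (rule piecewise_continuous_has_integral(1))
    fix j s assume "j < i" "t j \<le> s" "s < t (Suc j)"
    then show "feedback_v F y n t s = F (X j)"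
      unfolding X_def by (intro feedback_on_segment(2)[OF part]) (use i(1) in auto)
  qed (use mono in auto)
  moreover have "(\<Sum>j<i. integral {t j..t (Suc j)} (\<lambda>s. F (X j))) = X i - y"
    unfolding X_def knots_eq_sum[of F y t i] using mono by simp
  ultimately have A: "(feedback_v F y n t has_integral (X i - y)) {t 0..t i}" by simp
  have B: "(feedback_v F y n t has_integral ((s - t i) *\<^sub>R F (X i))) {t i..s}"
  proof (rule has_integral_spike_finite[of "{s}"])
    show "((\<lambda>s. F (X i)) has_integral (s - t i) *\<^sub>R F (X i)) {t i..s}"
      using has_integral_const_real[of "F (X i)" "t i" s] i by simp
    fix x assume "x \<in> {t i..s} - {s}"
    then have "t i \<le> x" "x < t (Suc i)" using i by auto
    then show "feedback_v F y n t x = F (X i)" unfolding X_def by (rule feedback_on_segment(2)[OF part i(1)])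
  qed simp
  have "t 0 \<le> t i" using partition_le[OF part, of 0 i] i(1) by simp
  from has_integral_combine[OF this i(2) A B] show ?thesis
    using part unfolding feedback_x_def X_def i_def is_partition_def by (simp add: algebra_simps)
qed

lemma sup_conv_segment_estimate:
  fixes v :: "real \<Rightarrow> 'a::euclidean_space"
  assumes \<kappa>: "\<kappa> \<noteq> 0" and b': "inf_conv_minimizer \<kappa> (\<lambda>z. - \<phi> z) (z + \<Delta>) b'"
    and v: "(v has_integral \<Delta>) {a..c}" and "a \<le> c" and l: "(l has_integral I) {a..c}"
    and ham: "\<And>s. s \<in> {a..c} \<Longrightarrow> - ((1 / \<kappa>\<^sup>2) *\<^sub>R b) \<bullet> v s - l s \<le> E"
  shows "\<phi> (z + b) - (norm b)\<^sup>2 / (2 * \<kappa>\<^sup>2) - (c - a) * E - (norm \<Delta>)\<^sup>2 / (2 * \<kappa>\<^sup>2)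
    \<le> \<phi> (z + \<Delta> + b') - (norm b')\<^sup>2 / (2 * \<kappa>\<^sup>2) + I"
proof -
  have "- ((1 / \<kappa>\<^sup>2) *\<^sub>R b) \<bullet> \<Delta> - (c - a) * E \<le> I"
    by (rule has_integral_ge_of_inner_bound[OF v \<open>a \<le> c\<close> l ham])
  then have "- (b \<bullet> \<Delta>) / \<kappa>\<^sup>2 \<le> I + (c - a) * E" by simp
  moreover have "- \<phi> (z + \<Delta> + b') + (norm b')\<^sup>2 / (2 * \<kappa>\<^sup>2)
      \<le> - \<phi> (z + b) + (norm b)\<^sup>2 / (2 * \<kappa>\<^sup>2) - (b \<bullet> \<Delta>) / \<kappa>\<^sup>2 + (norm \<Delta>)\<^sup>2 / (2 * \<kappa>\<^sup>2)"
    by (rule inf_conv_minimizer_shift[where \<psi> = "\<lambda>z. - \<phi> z", OF b' \<kappa>])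
  ultimately show ?thesis by linarith
qed

lemma integral_partition_sum:
  fixes f :: "real \<Rightarrow> 'a::banach"
  assumes part: "is_partition r n t" and f: "f integrable_on {0..r}"
  shows "(\<Sum>i<n. integral {t i..t (Suc i)} f) = integral {0..r} f"
proof (rule integral_unique[symmetric])
  have "t 0 = 0" "t n = r" using part unfolding is_partition_def by auto
  moreover have "{t i..t (Suc i)} \<subseteq> {0..r}" if "i < n" for i
    using partition_range[OF part, of i] partition_range[OF part, of "Suc i"] that by auto
  ultimately show "(f has_integral (\<Sum>i<n. integral {t i..t (Suc i)} f)) {0..r}"
    using has_integral_partition_sum[where n = n and t = t and I = "\<lambda>i. integral {t i..t (Suc i)} f"]
      partition_le[OF part] integrable_integral[OF integrable_subinterval_real[OF f]] by simp
qed

lemma sup_conv_path_estimate: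
  fixes v :: "real \<Rightarrow> 'a::euclidean_space" and y :: 'a and L :: "'a \<Rightarrow> 'a \<Rightarrow> real"
    and \<phi> :: "'a \<Rightarrow> real" and b :: "'a \<Rightarrow> 'a" and \<kappa> :: real
  defines "X \<equiv> \<lambda>s. y + integral {0..s} v"
    and "S \<equiv> \<lambda>z. \<phi> (z + b z) - (norm (b z))\<^sup>2 / (2 * \<kappa>\<^sup>2)"
  assumes \<kappa>: "\<kappa> \<noteq> 0" and b: "\<And>z. inf_conv_minimizer \<kappa> (\<lambda>z. - \<phi> z) z (b z)"
    and part: "is_partition r n t"
    and v: "v absolutely_integrable_on {0..r}"
    and l: "(\<lambda>s. L (X s) (v s)) integrable_on {0..r}"
    and ham: "\<And>i s w. i < n \<Longrightarrow> s \<in> {t i..t (Suc i)} \<Longrightarrow>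
      - ((1 / \<kappa>\<^sup>2) *\<^sub>R b (X (t i))) \<bullet> w - L (X s) w \<le> E"
    and osc: "\<And>i. i < n \<Longrightarrow> norm (X (t (Suc i)) - X (t i)) \<le> \<eta>"
  shows "S y - r * E - \<eta> * integral {0..r} (\<lambda>s. norm (v s)) / (2 * \<kappa>\<^sup>2)
    \<le> S (X r) + integral {0..r} (\<lambda>s. L (X s) (v s))"
proof -
  define a where "a i = integral {t i..t (Suc i)} (\<lambda>s. norm (v s))" for i
  define I where "I i = integral {t i..t (Suc i)} (\<lambda>s. L (X s) (v s))" for i
  have v_int: "v integrable_on {0..r}" "(\<lambda>s. norm (v s)) integrable_on {0..r}"
    using v unfolding absolutely_integrable_on_def by auto
  have step: "- S (X (t (Suc i))) \<le> - S (X (t i)) + (I i + (t (Suc i) - t i) * E + a i * (\<eta> / (2 * \<kappa>\<^sup>2)))"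
    if i: "i < n" for i
  proof -
    define \<Delta> where "\<Delta> = integral {t i..t (Suc i)} v"
    have mono: "t i \<le> t (Suc i)" using partition_le[OF part, of i "Suc i"] i by simp
    have seg: "{t i..t (Suc i)} \<subseteq> {0..r}" "{0..t (Suc i)} \<subseteq> {0..r}"
      using partition_range[OF part, of i] partition_range[OF part, of "Suc i"] i by auto
    have "integral {0..t i} v + \<Delta> = integral {0..t (Suc i)} v"
      unfolding \<Delta>_def using partition_range[OF part, of i] mono i
      by (intro Henstock_Kurzweil_Integration.integral_combine integrable_subinterval_real[OF v_int(1) seg(2)]) auto
    then have X_step: "X (t (Suc i)) = X (t i) + \<Delta>" unfolding X_def by (simp add: algebra_simps)
    have "norm \<Delta> \<le> a i" unfolding \<Delta>_def a_def
      by (rule integral_norm_bound_integral)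
        (use integrable_subinterval_real[OF v_int(1) seg(1)] integrable_subinterval_real[OF v_int(2) seg(1)] in auto)
    moreover have "norm \<Delta> \<le> \<eta>" using osc[OF i] X_step by simp
    ultimately have "(norm \<Delta>)\<^sup>2 \<le> \<eta> * a i" unfolding power2_eq_square
      using norm_ge_zero[of \<Delta>] by (intro mult_mono) linarith+
    then have "(norm \<Delta>)\<^sup>2 / (2 * \<kappa>\<^sup>2) \<le> a i * (\<eta> / (2 * \<kappa>\<^sup>2))"
      by (simp add: divide_right_mono mult.commute)
    moreover have "S (X (t i)) - (t (Suc i) - t i) * E - (norm \<Delta>)\<^sup>2 / (2 * \<kappa>\<^sup>2) \<le> S (X (t (Suc i))) + I i"
      unfolding S_def X_step
    proof (rule sup_conv_segment_estimate[OF \<kappa> b])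
      show "(v has_integral \<Delta>) {t i..t (Suc i)}"
        unfolding \<Delta>_def by (rule integrable_integral[OF integrable_subinterval_real[OF v_int(1) seg(1)]])
      show "((\<lambda>s. L (X s) (v s)) has_integral I i) {t i..t (Suc i)}"
        unfolding I_def by (rule integrable_integral[OF integrable_subinterval_real[OF l seg(1)]])
    qed (use mono ham[OF i] in auto)
    ultimately show ?thesis by linarith
  qed
  have "(\<Sum>i<n. I i + (t (Suc i) - t i) * E + a i * (\<eta> / (2 * \<kappa>\<^sup>2)))
      = (\<Sum>i<n. I i) + (\<Sum>i<n. t (Suc i) - t i) * E + (\<Sum>i<n. a i) * (\<eta> / (2 * \<kappa>\<^sup>2))"
    by (simp add: sum.distrib sum_distrib_right sum_divide_distrib)
  moreover have "(\<Sum>i<n. t (Suc i) - t i) = r" "t 0 = 0" "t n = r"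
    using part unfolding is_partition_def by (simp_all add: sum_lessThan_telescope)
  moreover note sum_telescope_le[of n "\<lambda>i. - S (X (t i))", OF step]
    integral_partition_sum[OF part l] integral_partition_sum[OF part v_int(2)]
  ultimately show ?thesis unfolding I_def a_def by (simp add: X_def mult.commute)
qed

section \<open>Superlinear Lagrangians\<close>

definition hamiltonian_maximizer :: "('a \<Rightarrow> 'a \<Rightarrow> real) \<Rightarrow> 'a \<Rightarrow> 'a::real_inner \<Rightarrow> 'a \<Rightarrow> bool" where
  "hamiltonian_maximizer L x p v \<longleftrightarrow> (\<forall>w. p \<bullet> w - L x w \<le> p \<bullet> v - L x v)"

locale superlinear_lagrangian =
  fixes L :: "real^'d \<Rightarrow> real^'d \<Rightarrow> real"
  assumes L_cont: "continuous_on UNIV (\<lambda>(x, v). L x v)"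
    and L_per: "\<And>v. periodic (\<lambda>x. L x v)"
    and L_superlin: "filterlim (\<lambda>v. (INF x. L x v) / norm v) at_top at_infinity"
begin

lemma continuous_on_L_comp:
  assumes "continuous_on S f" "continuous_on S g"
  shows "continuous_on S (\<lambda>s. L (f s) (g s))"
  using continuous_on_compose[OF continuous_on_Pair[OF assms] continuous_on_subset[OF L_cont]]
  by (simp add: o_def)

lemma L_bounded_on_cball:
  obtains B where "\<And>x v. norm v \<le> M \<Longrightarrow> \<bar>L x v\<bar> \<le> B"
proof -
  have "compact ((\<lambda>(x, v). L x v) ` (cbox 0 1 \<times> cball 0 M))"
    by (rule compact_continuous_image) (auto intro: continuous_on_subset[OF L_cont] compact_Times)
  then obtain B where B: "\<And>y. y \<in> (\<lambda>(x, v). L x v) ` (cbox 0 1 \<times> cball 0 M) \<Longrightarrow> norm y \<le> B"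
    using compact_imp_bounded bounded_iff by metis
  have "\<bar>L x v\<bar> \<le> B" if "norm v \<le> M" for x v
  proof -
    obtain k where k: "zvec k" "x - k \<in> cbox 0 1" by (rule exists_integer_shift_in_unit_box)
    then have "\<bar>L (x - k) v\<bar> \<le> B" using B[of "L (x - k) v"] that by force
    then show ?thesis using periodic_diff[OF L_per k(1)] by simp
  qed
  then show thesis by (rule that)
qed

lemma L_uniformly_continuous_in_x:
  assumes "0 < \<epsilon>"
  obtains \<delta> where "0 < \<delta>" "\<And>x x' v. norm v \<le> M \<Longrightarrow> dist x x' < \<delta> \<Longrightarrow> \<bar>L x v - L x' v\<bar> < \<epsilon>"
proof -
  let ?K = "cbox (-1) 2 \<times> cball 0 M :: ((real^'d) \<times> (real^'d)) set"
  have "uniformly_continuous_on ?K (\<lambda>(x, v). L x v)"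
    by (rule compact_uniformly_continuous) (auto intro: continuous_on_subset[OF L_cont] compact_Times)
  then obtain d where d: "0 < d" and
    dd: "\<And>a b. a \<in> ?K \<Longrightarrow> b \<in> ?K \<Longrightarrow> dist b a < d \<Longrightarrow> dist ((\<lambda>(x, v). L x v) b) ((\<lambda>(x, v). L x v) a) < \<epsilon>"
    unfolding uniformly_continuous_on_def using assms by metis
  have "\<bar>L x v - L x' v\<bar> < \<epsilon>" if v: "norm v \<le> M" and xx: "dist x x' < min d 1" for x x' v
  proof -
    obtain k where k: "zvec k" "x - k \<in> cbox 0 1" by (rule exists_integer_shift_in_unit_box)
    have "x' - k \<in> cbox (-1) 2" unfolding mem_box_cart
    proof
      fix i
      have "\<bar>x $ i - x' $ i\<bar> < 1"
        using component_le_norm_cart[of "x - x'" i] xx by (simp add: dist_norm)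
      moreover have "0 \<le> x $ i - k $ i \<and> x $ i - k $ i \<le> 1" using k(2) unfolding mem_box_cart by auto
      ultimately show "(-1::real^'d) $ i \<le> (x' - k) $ i \<and> (x' - k) $ i \<le> 2 $ i" by auto
    qed
    moreover have "x - k \<in> cbox (-1) 2" unfolding mem_box_cart
    proof
      fix i
      have "0 \<le> x $ i - k $ i \<and> x $ i - k $ i \<le> 1" using k(2) unfolding mem_box_cart by auto
      then show "(-1::real^'d) $ i \<le> (x - k) $ i \<and> (x - k) $ i \<le> 2 $ i" by auto
    qed
    moreover have "dist (x' - k, v) (x - k, v) < d"
      using xx by (simp add: dist_Pair_Pair dist_norm norm_minus_commute)
    ultimately have "dist (L (x' - k) v) (L (x - k) v) < \<epsilon>" using dd[of "(x - k, v)" "(x' - k, v)"] v by auto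
    then show ?thesis using periodic_diff[OF L_per k(1)] by (simp add: dist_real_def abs_minus_commute)
  qed
  then show thesis using d by (intro that[of "min d 1"]) auto
qed

lemma L_ge_linear:
  obtains C where "\<And>x w. R * norm w - C \<le> L x w"
proof -
  obtain b where b: "\<And>v. b \<le> norm v \<Longrightarrow> R \<le> (INF x. L x v) / norm v"
    using L_superlin[unfolded filterlim_at_top, rule_format, of R] unfolding eventually_at_infinity by blast
  define M where "M = max b 1"
  obtain B where B: "\<And>x v. norm v \<le> M \<Longrightarrow> \<bar>L x v\<bar> \<le> B" using L_bounded_on_cball[where M = M] by blast
  have "R * norm w - (B + \<bar>R\<bar> * M) \<le> L x w" for x w
  proof (cases "norm w \<le> M")
    case True
    have "R * norm w \<le> \<bar>R\<bar> * norm w" by (simp add: mult_right_mono)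
    also have "\<dots> \<le> \<bar>R\<bar> * M" using True by (simp add: mult_left_mono)
    finally have "R * norm w \<le> \<bar>R\<bar> * M" .
    then show ?thesis using B[OF True, of x] by linarith
  next
    case False
    then have w: "0 < norm w" "b \<le> norm w" unfolding M_def by auto
    obtain B' where B': "\<And>x v. norm v \<le> norm w \<Longrightarrow> \<bar>L x v\<bar> \<le> B'"
      using L_bounded_on_cball[where M = "norm w"] by blast
    have "bdd_below (range (\<lambda>x. L x w))"
    proof (rule bdd_belowI[of _ "- B'"], clarsimp)
      fix x' show "- B' \<le> L x' w" using B'[of w x'] by simp
    qed
    then have "R * norm w \<le> L x w"
      using b[OF w(2)] w(1) cINF_lower[of "\<lambda>x. L x w" UNIV x] by (simp add: pos_le_divide_eq)
    moreover have "0 \<le> M" unfolding M_def by simp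
    then have "0 \<le> B + \<bar>R\<bar> * M" using B[of 0 x] by (simp add: add_nonneg_nonneg)
    ultimately show ?thesis by linarith
  qed
  then show thesis by (rule that)
qed

lemma bdd_above_hamiltonian: "bdd_above (range (\<lambda>v. p \<bullet> v - L x v))"
proof -
  obtain C where C: "\<And>x w. norm p * norm w - C \<le> L x w" using L_ge_linear[where R = "norm p"] by blast
  show ?thesis
  proof (rule bdd_aboveI[of _ C], clarsimp)
    fix v
    show "p \<bullet> v - L x v \<le> C" using norm_cauchy_schwarz[of p v] C[of v x] by linarith
  qed
qed

lemma le_hamiltonian: "p \<bullet> v - L x v \<le> hamiltonian L x p"
  unfolding hamiltonian_def by (rule cSUP_upper[OF UNIV_I bdd_above_hamiltonian])

lemma hamiltonian_le_iff: "hamiltonian L x p \<le> c \<longleftrightarrow> (\<forall>v. p \<bullet> v - L x v \<le> c)"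
  unfolding hamiltonian_def by (simp add: cSUP_le_iff[OF UNIV_not_empty bdd_above_hamiltonian])

lemma hamiltonian_maximizer_value:
  "hamiltonian_maximizer L x p v \<Longrightarrow> hamiltonian L x p = p \<bullet> v - L x v"
  using hamiltonian_le_iff[of x p "p \<bullet> v - L x v"] le_hamiltonian[of p v x]
  unfolding hamiltonian_maximizer_def by simp

lemma hamiltonian_maximizer_exists: "\<exists>v. hamiltonian_maximizer L x p v"
proof -
  obtain C where C: "\<And>x w. (norm p + 1) * norm w - C \<le> L x w"
    using L_ge_linear[where R = "norm p + 1"] by blast
  define R where "R = C + \<bar>L x 0\<bar> + 1"
  have "- C \<le> L x 0" using C[of 0 x] by simp
  then have R: "0 \<le> R" unfolding R_def by linarith
  have "continuous_on (cball 0 R) (\<lambda>w. p \<bullet> w - L x w)"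
    by (intro continuous_intros continuous_on_L_comp)
  moreover have "cball 0 R \<noteq> {}" using R by simp
  ultimately obtain v where v: "\<And>w. w \<in> cball 0 R \<Longrightarrow> p \<bullet> w - L x w \<le> p \<bullet> v - L x v"
    using continuous_attains_sup[OF compact_cball] by blast
  have "p \<bullet> w - L x w \<le> p \<bullet> v - L x v" for w
  proof (cases "w \<in> cball 0 R")
    case False
    have "p \<bullet> w - L x w \<le> C - norm w"
      using norm_cauchy_schwarz[of p w] C[of w x] by (simp add: distrib_right)
    also have "\<dots> \<le> - L x 0" using False abs_ge_self[of "L x 0"] unfolding R_def by simp
    finally show ?thesis using v[of 0] R by simp
  qed (rule v)
  then show ?thesis unfolding hamiltonian_maximizer_def by blast
qed

lemma hamiltonian_maximizer_norm_le:
  obtains M where "\<And>x p v. norm p \<le> R \<Longrightarrow> hamiltonian_maximizer L x p v \<Longrightarrow> norm v \<le> M"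
proof -
  obtain C where C: "\<And>x w. (R + 1) * norm w - C \<le> L x w" using L_ge_linear[where R = "R + 1"] by blast
  obtain B where B: "\<And>x v. norm v \<le> 0 \<Longrightarrow> \<bar>L x v\<bar> \<le> B" using L_bounded_on_cball[where M = 0] by blast
  have "norm v \<le> C + B" if p: "norm p \<le> R" and v: "hamiltonian_maximizer L x p v" for x p v
  proof -
    have "p \<bullet> 0 - L x 0 \<le> p \<bullet> v - L x v" using v unfolding hamiltonian_maximizer_def by blast
    moreover have "p \<bullet> v \<le> R * norm v"
      using norm_cauchy_schwarz[of p v] mult_right_mono[OF p norm_ge_zero[of v]] by linarith
    ultimately show ?thesis using C[of v x] B[of 0 x] by (simp add: distrib_right)
  qed
  then show thesis by (rule that)
qed

lemma hamiltonian_le_stable: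
  assumes "0 < \<epsilon>"
  obtains \<delta> where "0 < \<delta>"
    "\<And>z x q. norm q \<le> R \<Longrightarrow> dist x z < \<delta> \<Longrightarrow> hamiltonian L z q \<le> c \<Longrightarrow> hamiltonian L x q \<le> c + \<epsilon>"
proof -
  obtain C where C: "\<And>x w. (R + 1) * norm w - C \<le> L x w" using L_ge_linear[where R = "R + 1"] by blast
  define M where "M = max 0 (C - c)"
  obtain \<delta> where \<delta>: "0 < \<delta>" and uc: "\<And>x x' v. norm v \<le> M \<Longrightarrow> dist x x' < \<delta> \<Longrightarrow> \<bar>L x v - L x' v\<bar> < \<epsilon>"
    using L_uniformly_continuous_in_x[where M = M, OF assms] by blast
  have "hamiltonian L x q \<le> c + \<epsilon>"
    if q: "norm q \<le> R" and xz: "dist x z < \<delta>" and H: "hamiltonian L z q \<le> c" for z x q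
    unfolding hamiltonian_le_iff
  proof
    fix w
    show "q \<bullet> w - L x w \<le> c + \<epsilon>"
    proof (cases "norm w \<le> M")
      case True
      then have "\<bar>L z w - L x w\<bar> < \<epsilon>" using uc xz by (simp add: dist_commute)
      then show ?thesis using H le_hamiltonian[of q w z] by linarith
    next
      case False
      have "q \<bullet> w \<le> R * norm w"
        using norm_cauchy_schwarz[of q w] mult_right_mono[OF q norm_ge_zero[of w]] by linarith
      then have "q \<bullet> w - L x w \<le> C - norm w" using C[of w x] by (simp add: distrib_right)
      also have "\<dots> \<le> c" using False unfolding M_def by simp
      finally show ?thesis using assms by simp
    qed
  qed
  then show thesis using \<delta> that by blast
qed

lemma feedback_running_cost_has_integral:
  fixes F :: "real^'d \<Rightarrow> real^'d" and y :: "real^'d"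
  assumes part: "is_partition r n t"
  defines "c \<equiv> \<lambda>i s. L (knots F y t i + (s - t i) *\<^sub>R F (knots F y t i)) (F (knots F y t i))"
  shows "((\<lambda>s. L (feedback_x F y n t s) (feedback_v F y n t s)) has_integral
      (\<Sum>i<n. integral {t i..t (Suc i)} (c i))) {0..r}"
    and "(\<lambda>s. L (feedback_x F y n t s) (feedback_v F y n t s)) absolutely_integrable_on {0..r}"
proof -
  have mono: "\<And>i. i < n \<Longrightarrow> t i \<le> t (Suc i)" using part unfolding is_partition_def by (simp add: less_imp_le)
  have cont: "\<And>i. i < n \<Longrightarrow> continuous_on {t i..t (Suc i)} (c i)"
    unfolding c_def by (intro continuous_on_L_comp continuous_intros)
  have eq: "L (feedback_x F y n t s) (feedback_v F y n t s) = c i s"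
    if "i < n" "t i \<le> s" "s < t (Suc i)" for i s
    unfolding c_def feedback_on_segment[OF part that] ..
  have "t 0 = 0" "t n = r" using part unfolding is_partition_def by auto
  with piecewise_continuous_has_integral[where n = n and t = t, OF mono cont eq]
  show "((\<lambda>s. L (feedback_x F y n t s) (feedback_v F y n t s)) has_integral
      (\<Sum>i<n. integral {t i..t (Suc i)} (c i))) {0..r}"
    and "(\<lambda>s. L (feedback_x F y n t s) (feedback_v F y n t s)) absolutely_integrable_on {0..r}"
    by simp_all
qed

lemma lax_oleinik_le_feedback_cost:
  assumes part: "is_partition r n t" and r: "0 < r"
  shows "lax_oleinik L r \<phi> y \<le> ereal (feedback_cost L \<phi> F y r n t)"
proof -
  define v where "v = feedback_v F y n t"
  have t_ends: "t 0 = 0" "t n = r" using part unfolding is_partition_def by auto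
  have "v absolutely_integrable_on {0..r}"
    using piecewise_continuous_has_integral(2)[of n t "\<lambda>i s. F (knots F y t i)" v]
      feedback_on_segment(2)[OF part] partition_le[OF part] t_ends unfolding v_def by auto
  moreover have traj: "y + integral {0..s} v = feedback_x F y n t s" if "s \<in> {0..r}" for s
    using integral_unique[OF feedback_v_has_integral[OF part r, of s F y]] that unfolding v_def by simp
  then have eq: "L (y + integral {0..s} v) (v s) = L (feedback_x F y n t s) (feedback_v F y n t s)"
    if "s \<in> {0..r}" for s
    using that unfolding v_def by simp
  have "(\<lambda>s. L (y + integral {0..s} v) (v s)) absolutely_integrable_on {0..r}"
    by (rule absolutely_integrable_spike[OF feedback_running_cost_has_integral(2)[OF part] negligible_empty])
      (use eq in auto)
  moreover have "\<phi> (y + integral {0..r} v) + integral {0..r} (\<lambda>s. L (y + integral {0..s} v) (v s))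
      = feedback_cost L \<phi> F y r n t"
  proof -
    have "integral {0..r} (\<lambda>s. L (y + integral {0..s} v) (v s))
        = integral {0..r} (\<lambda>s. L (feedback_x F y n t s) (feedback_v F y n t s))"
      by (rule Henstock_Kurzweil_Integration.integral_cong) (rule eq)
    then show ?thesis unfolding feedback_cost_def using traj[of r] r by simp
  qed
  ultimately have "ereal (feedback_cost L \<phi> F y r n t) \<in> {ereal (\<phi> (y + integral {0..r} v)
        + integral {0..r} (\<lambda>t. L (y + integral {0..t} v) (v t))) | v.
        v absolutely_integrable_on {0..r} \<and>
        (\<lambda>t. L (y + integral {0..t} v) (v t)) absolutely_integrable_on {0..r}}"
    by (intro CollectI exI[of _ v]) simp
  then show ?thesis unfolding lax_oleinik_def by (rule Inf_lower)
qed

end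

section \<open>The Lax--Oleinik operator on a viscosity solution\<close>

definition feedback_law ::
  "(real^'d \<Rightarrow> real^'d \<Rightarrow> real) \<Rightarrow> (real^'d \<Rightarrow> real) \<Rightarrow> real
     \<Rightarrow> (real^'d \<Rightarrow> real^'d) \<Rightarrow> (real^'d \<Rightarrow> real^'d) \<Rightarrow> bool" where
  "feedback_law L \<phi> \<kappa> b V \<longleftrightarrow> (\<forall>x. inf_conv_minimizer \<kappa> \<phi> x (b x) \<and>
     hamiltonian_maximizer L (x + b x) ((1 / \<kappa>\<^sup>2) *\<^sub>R b x) (V x))"

lemma limsup_fine_le:
  assumes "0 < \<rho>" "\<And>n t. is_partition r n t \<Longrightarrow> fineness n t < \<rho> \<Longrightarrow> f n t \<le> c"
  shows "limsup_fine r f \<le> ereal c"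
proof -
  have "Sup {ereal (f n t) | n t. is_partition r n t \<and> fineness n t < \<rho>} \<le> ereal c"
    by (rule Sup_least) (use assms(2) in auto)
  then show ?thesis unfolding limsup_fine_def using assms(1) by (intro INF_lower2[of \<rho>]) auto
qed

locale hj_solution = superlinear_lagrangian L for L :: "real^'d \<Rightarrow> real^'d \<Rightarrow> real" +
  fixes \<phi> :: "real^'d \<Rightarrow> real" and Hbar :: real
  assumes visc: "viscosity_solution L \<phi> Hbar"
begin

lemma phi_cont: "continuous_on UNIV \<phi>" and phi_per: "periodic \<phi>"
  using visc unfolding viscosity_solution_def by auto

lemma phi_bounded: obtains B where "\<And>x. \<bar>\<phi> x\<bar> \<le> B"
  using periodic_continuous_bounded[OF phi_cont phi_per] by auto

lemma superdiff_bounded: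
  obtains K0 where "\<And>x p. p \<in> hadamard_superdiff \<phi> x \<Longrightarrow> norm p \<le> K0"
proof -
  obtain B where B: "\<And>x v. norm v \<le> 1 \<Longrightarrow> \<bar>L x v\<bar> \<le> B" using L_bounded_on_cball[where M = 1] by blast
  have "norm p \<le> \<bar>Hbar\<bar> + B" if "p \<in> hadamard_superdiff \<phi> x" for x p
  proof (cases "p = 0")
    case True
    then show ?thesis using B[of 0 x] by simp
  next
    case False
    have "hamiltonian L x (- p) \<le> Hbar" using visc that unfolding viscosity_solution_def by blast
    then have "(- p) \<bullet> (- (p /\<^sub>R norm p)) - L x (- (p /\<^sub>R norm p)) \<le> Hbar"
      using le_hamiltonian order_trans by blast
    moreover have "(- p) \<bullet> (- (p /\<^sub>R norm p)) = norm p"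
      using False by (simp add: power2_norm_eq_inner[symmetric] power2_eq_square)
    ultimately show ?thesis using B[of "- (p /\<^sub>R norm p)" x] False by simp
  qed
  then show thesis by (rule that)
qed

lemma phi_lipschitz:
  obtains K where "0 < K" "\<And>x y. \<phi> x - \<phi> y \<le> K * norm (x - y)"
proof -
  obtain K0 where K0: "\<And>x p. p \<in> hadamard_superdiff \<phi> x \<Longrightarrow> norm p \<le> K0" using superdiff_bounded by blast
  obtain B where B: "\<And>x. \<bar>\<phi> x\<bar> \<le> B" using phi_bounded by blast
  have "\<phi> x - \<phi> y \<le> (max K0 0 + 1) * norm (x - y)" for x y
    by (rule lipschitz_of_bounded_superdiff[OF phi_cont B]) (use K0 in auto)
  then show thesis by (intro that[of "max K0 0 + 1"]) auto
qed

lemma hamiltonian_near_sup_conv: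
  assumes "0 < \<epsilon>"
  obtains \<delta> where "0 < \<delta>"
    "\<And>\<kappa> z b x. \<kappa> \<noteq> 0 \<Longrightarrow> inf_conv_minimizer \<kappa> (\<lambda>z. - \<phi> z) z b \<Longrightarrow> norm b \<le> 2 * \<kappa>\<^sup>2 * K \<Longrightarrow>
       dist x (z + b) < \<delta> \<Longrightarrow> hamiltonian L x (- ((1 / \<kappa>\<^sup>2) *\<^sub>R b)) \<le> Hbar + \<epsilon>"
proof -
  obtain \<delta> where \<delta>: "0 < \<delta>" and stab: "\<And>z x q. norm q \<le> 2 * K \<Longrightarrow> dist x z < \<delta> \<Longrightarrow>
      hamiltonian L z q \<le> Hbar \<Longrightarrow> hamiltonian L x q \<le> Hbar + \<epsilon>"
    using hamiltonian_le_stable[where R = "2 * K" and c = Hbar, OF assms] by blast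
  have "hamiltonian L x (- ((1 / \<kappa>\<^sup>2) *\<^sub>R b)) \<le> Hbar + \<epsilon>"
    if \<kappa>: "\<kappa> \<noteq> 0" and b: "inf_conv_minimizer \<kappa> (\<lambda>z. - \<phi> z) z b" and nb: "norm b \<le> 2 * \<kappa>\<^sup>2 * K"
      and x: "dist x (z + b) < \<delta>" for \<kappa> z b x
  proof (rule stab[OF _ x])
    show "norm (- ((1 / \<kappa>\<^sup>2) *\<^sub>R b)) \<le> 2 * K" using nb \<kappa> by (simp add: pos_divide_le_eq mult_ac)
    show "hamiltonian L (z + b) (- ((1 / \<kappa>\<^sup>2) *\<^sub>R b)) \<le> Hbar"
      using visc inf_conv_minimizer_neg_superdiff[OF b \<kappa>] unfolding viscosity_solution_def by blast
  qed
  with \<delta> show thesis using that by blast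
qed

lemma sup_conv_controlled_cost_ge:
  assumes \<kappa>: "\<kappa> \<noteq> 0" and b: "\<And>z. inf_conv_minimizer \<kappa> (\<lambda>z. - \<phi> z) z (b z)"
    and ham: "\<And>z x. dist x z < \<delta> \<Longrightarrow> hamiltonian L x (- ((1 / \<kappa>\<^sup>2) *\<^sub>R b z)) \<le> E"
    and \<delta>: "0 < \<delta>" and \<epsilon>: "0 < \<epsilon>" and r: "0 < r"
    and v: "v absolutely_integrable_on {0..r}"
    and l: "(\<lambda>s. L (y + integral {0..s} v) (v s)) absolutely_integrable_on {0..r}"
  defines "x_r \<equiv> y + integral {0..r} v"
  shows "\<phi> (y + b y) - (norm (b y))\<^sup>2 / (2 * \<kappa>\<^sup>2) - r * E - \<epsilon>
    \<le> \<phi> (x_r + b x_r) - (norm (b x_r))\<^sup>2 / (2 * \<kappa>\<^sup>2) + integral {0..r} (\<lambda>s. L (y + integral {0..s} v) (v s))"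
proof -
  define X where "X s = y + integral {0..s} v" for s
  define A where "A = integral {0..r} (\<lambda>s. norm (v s))"
  \<comment> \<open>On cells where the path moves by less than \<eta> the quadratic errors sum to at most \<eta> A/(2\<kappa>^2).\<close>
  define \<eta> where "\<eta> = min \<delta> (\<epsilon> * (2 * \<kappa>\<^sup>2) / (A + 1))"
  have A: "0 \<le> A" unfolding A_def using v by (intro integral_nonneg) (auto simp: absolutely_integrable_on_def)
  have \<eta>_pos: "0 < \<eta>" unfolding \<eta>_def using \<delta> \<epsilon> \<kappa> A by auto
  have \<eta>_le: "\<eta> \<le> \<delta>" unfolding \<eta>_def by (rule min.cobounded1)
  have "\<eta> \<le> \<epsilon> * (2 * \<kappa>\<^sup>2) / (A + 1)" unfolding \<eta>_def by (rule min.cobounded2)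
  then have "\<eta> * (A + 1) \<le> \<epsilon> * (2 * \<kappa>\<^sup>2)" using A by (simp add: pos_le_divide_eq)
  then have "\<eta> * A \<le> \<epsilon> * (2 * \<kappa>\<^sup>2)" using \<eta>_pos by (simp add: distrib_left)
  then have \<eta>A: "\<eta> * A / (2 * \<kappa>\<^sup>2) \<le> \<epsilon>" using \<kappa> by (simp add: pos_divide_le_eq)
  have "v integrable_on {0..r}" using v by (simp add: absolutely_integrable_on_def)
  then have "continuous_on {0..r} X"
    unfolding X_def by (intro continuous_on_add continuous_on_const indefinite_integral_continuous_1)
  then obtain n t where part: "is_partition r n t"
    and close: "\<And>i s. i < n \<Longrightarrow> s \<in> {t i..t (Suc i)} \<Longrightarrow> dist (X s) (X (t i)) < \<eta>"
    by (rule exists_partition_small_oscillation[OF _ r \<eta>_pos]) blast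
  have "\<phi> (y + b y) - (norm (b y))\<^sup>2 / (2 * \<kappa>\<^sup>2) - r * E - \<eta> * A / (2 * \<kappa>\<^sup>2)
      \<le> \<phi> (X r + b (X r)) - (norm (b (X r)))\<^sup>2 / (2 * \<kappa>\<^sup>2) + integral {0..r} (\<lambda>s. L (X s) (v s))"
    unfolding A_def X_def
  proof (rule sup_conv_path_estimate[where \<phi> = \<phi> and b = b and L = L and E = E and \<eta> = \<eta>,
        OF \<kappa> b part v])
    show "(\<lambda>s. L (y + integral {0..s} v) (v s)) integrable_on {0..r}"
      using l by (simp add: absolutely_integrable_on_def)
    fix i s w assume "i < n" "s \<in> {t i..t (Suc i)}"
    then have "hamiltonian L (X s) (- ((1 / \<kappa>\<^sup>2) *\<^sub>R b (X (t i)))) \<le> E"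
      using close \<eta>_le by (intro ham) fastforce
    then show "- ((1 / \<kappa>\<^sup>2) *\<^sub>R b (y + integral {0..t i} v)) \<bullet> w - L (y + integral {0..s} v) w \<le> E"
      using le_hamiltonian[of "- ((1 / \<kappa>\<^sup>2) *\<^sub>R b (X (t i)))" w "X s"] unfolding X_def by linarith
  next
    fix i assume "i < n"
    then show "norm (y + integral {0..t (Suc i)} v - (y + integral {0..t i} v)) \<le> \<eta>"
      using close[of i "t (Suc i)"] partition_le[OF part, of i "Suc i"] unfolding X_def dist_norm by simp
  qed
  then show ?thesis using \<eta>A unfolding X_def x_r_def by simp
qed

lemma controlled_cost_ge:
  assumes r: "0 < r" and v: "v absolutely_integrable_on {0..r}"
    and l: "(\<lambda>s. L (y + integral {0..s} v) (v s)) absolutely_integrable_on {0..r}"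
  shows "\<phi> y - r * Hbar \<le> \<phi> (y + integral {0..r} v) + integral {0..r} (\<lambda>s. L (y + integral {0..s} v) (v s))"
proof (rule field_le_epsilon)
  fix e :: real assume "0 < e"
  define \<epsilon> where "\<epsilon> = e / (r + 2)"
  have \<epsilon>: "0 < \<epsilon>" "e = (r + 2) * \<epsilon>" using \<open>0 < e\<close> r unfolding \<epsilon>_def by auto
  obtain K where K: "0 < K" and lip: "\<And>x y. \<phi> x - \<phi> y \<le> K * norm (x - y)"
    using phi_lipschitz by blast
  obtain \<delta> where \<delta>: "0 < \<delta>" and near: "\<And>\<kappa> z b x. \<kappa> \<noteq> 0 \<Longrightarrow> inf_conv_minimizer \<kappa> (\<lambda>z. - \<phi> z) z b \<Longrightarrow>
      norm b \<le> 2 * \<kappa>\<^sup>2 * K \<Longrightarrow> dist x (z + b) < \<delta> \<Longrightarrow> hamiltonian L x (- ((1 / \<kappa>\<^sup>2) *\<^sub>R b)) \<le> Hbar + \<epsilon>"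
    using hamiltonian_near_sup_conv[where K = K, OF \<epsilon>(1)] by blast
  have "0 < \<delta> / 2" using \<delta> by simp
  then obtain \<kappa> where \<kappa>: "0 < \<kappa>" "2 * \<kappa>\<^sup>2 * K \<le> \<delta> / 2" "K * (2 * \<kappa>\<^sup>2 * K) \<le> \<epsilon>"
    using exists_small_scale[OF K _ \<epsilon>(1), of "\<delta> / 2"] by (metis abs_of_pos order_refl)
  obtain B where B: "\<And>x. \<bar>\<phi> x\<bar> \<le> B" using phi_bounded by blast
  obtain b where b: "\<And>z. inf_conv_minimizer \<kappa> (\<lambda>z. - \<phi> z) z (b z)"
    using inf_conv_minimizer_exists[OF continuous_on_minus[OF phi_cont], of B \<kappa>] B \<kappa>(1) by auto
  have lip_b: "- \<phi> z - - \<phi> (z + b z) \<le> K * norm (b z)" for z using lip[of "z + b z" z] by simp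
  have nb: "norm (b z) \<le> 2 * \<kappa>\<^sup>2 * K" for z
    using inf_conv_minimizer_norm_le[where \<psi> = "\<lambda>z. - \<phi> z", OF b _ lip_b] \<kappa>(1) K by simp
  have ham: "hamiltonian L x (- ((1 / \<kappa>\<^sup>2) *\<^sub>R b z)) \<le> Hbar + \<epsilon>" if "dist x z < \<delta> / 2" for z x
  proof (rule near[OF _ b nb])
    have "dist x (z + b z) \<le> dist x z + dist z (z + b z)" by (rule dist_triangle)
    then show "dist x (z + b z) < \<delta>" using that nb[of z] \<kappa>(2) by (simp add: dist_norm)
  qed (use \<kappa> in simp)
  define S where "S x = \<phi> (x + b x) - (norm (b x))\<^sup>2 / (2 * \<kappa>\<^sup>2)" for x
  define x\<^sub>r where "x\<^sub>r = y + integral {0..r} v"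
  define I where "I = integral {0..r} (\<lambda>s. L (y + integral {0..s} v) (v s))"
  from sup_conv_controlled_cost_ge[OF _ b ham \<open>0 < \<delta> / 2\<close> \<epsilon>(1) r v l]
  have "S y - r * (Hbar + \<epsilon>) - \<epsilon> \<le> S x\<^sub>r + I"
    using \<kappa>(1) unfolding S_def I_def x\<^sub>r_def by simp
  moreover have "\<phi> y \<le> S y"
    using inf_conv_minimizer_value_bounds(2)[where \<psi> = "\<lambda>z. - \<phi> z", OF b lip_b, of y] unfolding S_def by simp
  moreover have "K * norm (b x\<^sub>r) \<le> K * (2 * \<kappa>\<^sup>2 * K)" using nb K by (simp add: mult_left_mono)
  then have "S x\<^sub>r \<le> \<phi> x\<^sub>r + \<epsilon>"
    using inf_conv_minimizer_value_bounds(1)[where \<psi> = "\<lambda>z. - \<phi> z", OF b lip_b, of x\<^sub>r] \<kappa>(3)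
    unfolding S_def by simp
  moreover have "r * (Hbar + \<epsilon>) = r * Hbar + r * \<epsilon>" "e = r * \<epsilon> + 2 * \<epsilon>"
    using \<epsilon>(2) by (simp_all add: algebra_simps)
  ultimately show "\<phi> y - r * Hbar \<le> \<phi> (y + integral {0..r} v) + integral {0..r} (\<lambda>s. L (y + integral {0..s} v) (v s)) + e"
    unfolding I_def[symmetric] x\<^sub>r_def[symmetric] by linarith
qed

lemma lax_oleinik_ge:
  assumes "0 < r"
  shows "ereal (\<phi> y - r * Hbar) \<le> lax_oleinik L r \<phi> y"
  unfolding lax_oleinik_def using controlled_cost_ge[OF assms] by (force intro: Inf_greatest)

lemma feedback_law_exists:
  assumes "\<kappa> \<noteq> 0"
  shows "\<exists>b V. feedback_law L \<phi> \<kappa> b V"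
proof -
  obtain B where B: "\<And>x. \<bar>\<phi> x\<bar> \<le> B" using phi_bounded by blast
  obtain b where b: "\<And>x. inf_conv_minimizer \<kappa> \<phi> x (b x)"
    using inf_conv_minimizer_exists[OF phi_cont, of B \<kappa>] B assms by auto
  define V where "V x = (SOME v. hamiltonian_maximizer L (x + b x) ((1 / \<kappa>\<^sup>2) *\<^sub>R b x) v)" for x
  have "hamiltonian_maximizer L (x + b x) ((1 / \<kappa>\<^sup>2) *\<^sub>R b x) (V x)" for x
    unfolding V_def by (rule someI_ex, rule hamiltonian_maximizer_exists)
  with b show ?thesis unfolding feedback_law_def by blast
qed

lemma inf_conv_feedback_decrease:
  fixes x :: "real^'d"
  assumes \<kappa>: "\<kappa> \<noteq> 0" and fb: "feedback_law L \<phi> \<kappa> b V" and h: "0 \<le> h"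
  defines "x' \<equiv> x + h *\<^sub>R V x"
  shows "\<phi> (x' + b x') + (norm (b x'))\<^sup>2 / (2 * \<kappa>\<^sup>2)
    \<le> \<phi> (x + b x) + (norm (b x))\<^sup>2 / (2 * \<kappa>\<^sup>2) - h * (Hbar + L (x + b x) (V x))
      + h\<^sup>2 * (norm (V x))\<^sup>2 / (2 * \<kappa>\<^sup>2)"
proof -
  have min: "inf_conv_minimizer \<kappa> \<phi> x (b x)" "inf_conv_minimizer \<kappa> \<phi> (x + h *\<^sub>R V x) (b (x + h *\<^sub>R V x))"
    and max: "hamiltonian_maximizer L (x + b x) ((1 / \<kappa>\<^sup>2) *\<^sub>R b x) (V x)"
    using fb unfolding feedback_law_def x'_def by auto
  have "Hbar \<le> hamiltonian L (x + b x) (- ((1 / \<kappa>\<^sup>2) *\<^sub>R (- b x)))"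
    using visc inf_conv_minimizer_subdiff[OF min(1) \<kappa>] unfolding viscosity_solution_def by blast
  then have "Hbar + L (x + b x) (V x) \<le> (b x \<bullet> V x) / \<kappa>\<^sup>2"
    using hamiltonian_maximizer_value[OF max] by simp
  then have "h * (Hbar + L (x + b x) (V x)) \<le> h * ((b x \<bullet> V x) / \<kappa>\<^sup>2)" by (rule mult_left_mono[OF _ h])
  also have "\<dots> = (b x \<bullet> (h *\<^sub>R V x)) / \<kappa>\<^sup>2" by simp
  finally have "h * (Hbar + L (x + b x) (V x)) \<le> (b x \<bullet> (h *\<^sub>R V x)) / \<kappa>\<^sup>2" .
  moreover have "\<phi> (x' + b x') + (norm (b x'))\<^sup>2 / (2 * \<kappa>\<^sup>2) \<le> \<phi> (x + b x) + (norm (b x))\<^sup>2 / (2 * \<kappa>\<^sup>2)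
      - (b x \<bullet> (h *\<^sub>R V x)) / \<kappa>\<^sup>2 + (norm (h *\<^sub>R V x))\<^sup>2 / (2 * \<kappa>\<^sup>2)"
    unfolding x'_def by (rule inf_conv_minimizer_shift[where \<psi> = \<phi>, OF min(2) \<kappa>])
  moreover have "(norm (h *\<^sub>R V x))\<^sup>2 / (2 * \<kappa>\<^sup>2) = h\<^sup>2 * (norm (V x))\<^sup>2 / (2 * \<kappa>\<^sup>2)"
    using h by (simp add: power_mult_distrib)
  ultimately show ?thesis by linarith
qed

lemma feedback_segment_estimate:
  fixes x :: "real^'d"
  assumes \<kappa>: "\<kappa> \<noteq> 0" and fb: "feedback_law L \<phi> \<kappa> b V"
    and nb: "norm (b x) \<le> \<beta>" and nV: "norm (V x) \<le> M"
    and uc: "\<And>x x' v. norm v \<le> M \<Longrightarrow> dist x x' < \<delta> \<Longrightarrow> L x' v \<le> L x v + \<epsilon>"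
    and ac: "a < c" "c - a \<le> \<rho>" and small: "\<beta> + \<rho> * M < \<delta>"
  defines "m \<equiv> \<lambda>x. \<phi> (x + b x) + (norm (b x))\<^sup>2 / (2 * \<kappa>\<^sup>2)"
  shows "m (x + (c - a) *\<^sub>R V x) + integral {a..c} (\<lambda>s. L (x + (s - a) *\<^sub>R V x) (V x))
    \<le> m x + (c - a) * (\<epsilon> - Hbar + \<rho> * M\<^sup>2 / (2 * \<kappa>\<^sup>2))"
proof -
  define h where "h = c - a"
  define I where "I = integral {a..c} (\<lambda>s. L (x + (s - a) *\<^sub>R V x) (V x))"
  have h: "0 < h" "h \<le> \<rho>" using ac unfolding h_def by auto
  let ?z = "x + b x"
  have decr: "m (x + h *\<^sub>R V x) \<le> m x - h * (Hbar + L ?z (V x)) + h\<^sup>2 * (norm (V x))\<^sup>2 / (2 * \<kappa>\<^sup>2)"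
    using inf_conv_feedback_decrease[OF \<kappa> fb, of h x] h(1) unfolding m_def by simp
  have bound: "L (x + (s - a) *\<^sub>R V x) (V x) \<le> L ?z (V x) + \<epsilon>" if s: "s \<in> {a..c}" for s
  proof (rule uc[OF nV])
    have "norm ((s - a) *\<^sub>R V x) \<le> \<rho> * M" using s h nV unfolding h_def by (auto intro!: mult_mono)
    then have "norm (b x - (s - a) *\<^sub>R V x) \<le> \<beta> + \<rho> * M"
      using norm_triangle_ineq4[of "b x" "(s - a) *\<^sub>R V x"] nb by linarith
    then show "dist ?z (x + (s - a) *\<^sub>R V x) < \<delta>" using small by (simp add: dist_norm)
  qed
  have "((\<lambda>s. L (x + (s - a) *\<^sub>R V x) (V x)) has_integral I) {a..c}"
    unfolding I_def by (intro integrable_integral integrable_continuous_interval continuous_on_L_comp continuous_intros)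
  moreover have "((\<lambda>s. L ?z (V x) + \<epsilon>) has_integral h * (L ?z (V x) + \<epsilon>)) {a..c}"
    using has_integral_const_real[of "L ?z (V x) + \<epsilon>" a c] h unfolding h_def by simp
  ultimately have int: "I \<le> h * (L ?z (V x) + \<epsilon>)" by (rule has_integral_le) (rule bound)
  have "h * (norm (V x))\<^sup>2 \<le> \<rho> * M\<^sup>2" using h nV by (intro mult_mono power_mono) auto
  then have "h\<^sup>2 * (norm (V x))\<^sup>2 / (2 * \<kappa>\<^sup>2) \<le> h * (\<rho> * M\<^sup>2 / (2 * \<kappa>\<^sup>2))"
    using h(1) by (simp add: power2_eq_square divide_right_mono mult.assoc mult_left_mono)
  moreover have "h * (\<epsilon> - Hbar + \<rho> * M\<^sup>2 / (2 * \<kappa>\<^sup>2)) = h * \<epsilon> - h * Hbar + h * (\<rho> * M\<^sup>2 / (2 * \<kappa>\<^sup>2))"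
    "h * (Hbar + L ?z (V x)) = h * Hbar + h * L ?z (V x)" "h * (L ?z (V x) + \<epsilon>) = h * L ?z (V x) + h * \<epsilon>"
    by (simp_all add: algebra_simps)
  ultimately show ?thesis using decr int unfolding h_def[symmetric] I_def[symmetric] by linarith
qed

lemma feedback_cost_le_partition:
  assumes \<kappa>: "\<kappa> \<noteq> 0" and fb: "feedback_law L \<phi> \<kappa> b V"
    and nb: "\<And>x. norm (b x) \<le> \<beta>" and nV: "\<And>x. norm (V x) \<le> M"
    and lip: "\<And>x y. \<phi> x - \<phi> y \<le> K * norm (x - y)" and K: "0 \<le> K"
    and uc: "\<And>x x' v. norm v \<le> M \<Longrightarrow> dist x x' < \<delta> \<Longrightarrow> L x' v \<le> L x v + \<epsilon>"
    and part: "is_partition r n t" and r: "0 < r"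
    and small: "\<beta> + fineness n t * M < \<delta>"
  shows "feedback_cost L \<phi> V y r n t
    \<le> \<phi> y - Hbar * r + r * \<epsilon> + K * \<beta> + r * fineness n t * M\<^sup>2 / (2 * \<kappa>\<^sup>2)"
proof -
  define X where "X = knots V y t"
  define m where "m x = \<phi> (x + b x) + (norm (b x))\<^sup>2 / (2 * \<kappa>\<^sup>2)" for x
  define I where "I i = integral {t i..t (Suc i)} (\<lambda>s. L (X i + (s - t i) *\<^sub>R V (X i)) (V (X i)))" for i
  define C where "C = \<epsilon> - Hbar + fineness n t * M\<^sup>2 / (2 * \<kappa>\<^sup>2)"
  have min: "inf_conv_minimizer \<kappa> \<phi> x (b x)" for x using fb unfolding feedback_law_def by blast
  have lip_b: "\<phi> x - \<phi> (x + b x) \<le> K * norm (b x)" for x using lip[of x "x + b x"] by simp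
  have step: "m (X (Suc i)) \<le> m (X i) + ((t (Suc i) - t i) * C - I i)" if i: "i < n" for i
  proof -
    have "t i < t (Suc i)" "t (Suc i) - t i \<le> fineness n t"
      using part i segment_le_fineness[OF i] unfolding is_partition_def by auto
    from feedback_segment_estimate[OF \<kappa> fb nb nV uc this small, of "X i"]
    show ?thesis unfolding m_def I_def C_def X_def by simp
  qed
  have "m (X n) \<le> m (X 0) + (\<Sum>i<n. (t (Suc i) - t i) * C - I i)"
    by (rule sum_telescope_le[where f = "\<lambda>i. m (X i)", OF step])
  also have "(\<Sum>i<n. (t (Suc i) - t i) * C - I i) = (\<Sum>i<n. t (Suc i) - t i) * C - (\<Sum>i<n. I i)"
    by (simp only: sum_subtractf[of "\<lambda>i. (t (Suc i) - t i) * C"] sum_distrib_right)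
  also have "(\<Sum>i<n. t (Suc i) - t i) = r"
    using part unfolding is_partition_def by (simp add: sum_lessThan_telescope)
  finally have telescoped: "m (X n) + (\<Sum>i<n. I i) \<le> m (X 0) + r * C" by simp
  have "feedback_cost L \<phi> V y r n t = \<phi> (X n) + (\<Sum>i<n. I i)"
    using integral_unique[OF feedback_running_cost_has_integral(1)[OF part, of V y]]
    unfolding feedback_cost_def feedback_x_end[OF part r] X_def I_def by simp
  moreover have "\<phi> (X n) \<le> m (X n) + K * \<beta>"
    using inf_conv_minimizer_value_bounds(1)[where \<psi> = \<phi>, OF min lip_b, of "X n"]
      mult_left_mono[OF nb[of "X n"] K] unfolding m_def by simp
  moreover have "m (X 0) \<le> \<phi> y"
    using inf_conv_minimizer_value_bounds(2)[where \<psi> = \<phi>, OF min lip_b, of y] unfolding m_def X_def by simp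
  moreover have "r * C = r * \<epsilon> - Hbar * r + r * fineness n t * M\<^sup>2 / (2 * \<kappa>\<^sup>2)"
    unfolding C_def by (simp add: algebra_simps)
  ultimately show ?thesis using telescoped by linarith
qed

lemma feedback_cost_eventually_le:
  assumes \<kappa>: "0 < \<kappa>" and fb: "feedback_law L \<phi> \<kappa> b V"
    and lip: "\<And>x y. \<phi> x - \<phi> y \<le> K * norm (x - y)" and K: "0 \<le> K"
    and nb: "\<And>x. norm (b x) \<le> \<beta>" and \<beta>: "K * \<beta> \<le> \<epsilon>" "\<beta> \<le> \<delta> / 2"
    and nV: "\<And>x. norm (V x) \<le> M"
    and uc: "\<And>x x' v. norm v \<le> M \<Longrightarrow> dist x x' < \<delta> \<Longrightarrow> L x' v \<le> L x v + \<epsilon> / 2"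
    and \<epsilon>: "0 < \<epsilon>" and \<delta>: "0 < \<delta>" and r: "0 < r"
  shows "\<exists>\<rho>>0. \<forall>n t. is_partition r n t \<and> fineness n t < \<rho> \<longrightarrow>
    feedback_cost L \<phi> V y r n t \<le> \<phi> y - Hbar * r + (r + 1) * \<epsilon>"
proof -
  have M: "0 \<le> M" using nV[of 0] norm_ge_zero order_trans by blast
  define \<rho> where "\<rho> = min (\<delta> / (2 * (M + 1))) (\<epsilon> * \<kappa>\<^sup>2 / (M\<^sup>2 + 1))"
  have \<rho>: "0 < \<rho>" unfolding \<rho>_def using \<delta> \<epsilon> \<kappa> M by (simp add: add_nonneg_pos)
  have "feedback_cost L \<phi> V y r n t \<le> \<phi> y - Hbar * r + (r + 1) * \<epsilon>"
    if part: "is_partition r n t" and fine: "fineness n t < \<rho>" for n t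
  proof -
    define f where "f = fineness n t"
    have f: "0 < f" "f < \<rho>" using fineness_pos[OF part r] fine unfolding f_def by auto
    have "f * (M + 1) < \<rho> * (M + 1)" using f M by (simp add: mult_strict_right_mono)
    also have "\<dots> \<le> \<delta> / (2 * (M + 1)) * (M + 1)"
      using M unfolding \<rho>_def by (intro mult_right_mono min.cobounded1) auto
    also have "\<dots> = \<delta> / 2" using M by (simp add: field_simps add_nonneg_pos)
    finally have small: "\<beta> + f * M < \<delta>" using \<beta>(2) f M by (simp add: distrib_left)
    have "f * (M\<^sup>2 + 1) \<le> \<rho> * (M\<^sup>2 + 1)" using f by (simp add: add_nonneg_pos mult_right_mono)
    also have "\<dots> \<le> \<epsilon> * \<kappa>\<^sup>2 / (M\<^sup>2 + 1) * (M\<^sup>2 + 1)"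
      unfolding \<rho>_def by (intro mult_right_mono min.cobounded2) auto
    also have "\<dots> = \<epsilon> * \<kappa>\<^sup>2" using add_nonneg_pos[OF zero_le_power2[of M] zero_less_one] by simp
    finally have "f * M\<^sup>2 \<le> \<epsilon> * \<kappa>\<^sup>2" using f by (simp add: distrib_left)
    then have "r * f * M\<^sup>2 / (2 * \<kappa>\<^sup>2) \<le> r * (\<epsilon> / 2)"
      using r \<kappa> by (simp add: pos_divide_le_eq mult.assoc mult_left_mono)
    moreover have "feedback_cost L \<phi> V y r n t
        \<le> \<phi> y - Hbar * r + r * (\<epsilon> / 2) + K * \<beta> + r * f * M\<^sup>2 / (2 * \<kappa>\<^sup>2)"
      unfolding f_def
      by (rule feedback_cost_le_partition[OF _ fb nb nV lip K uc part r]) (use \<kappa> small f_def in auto)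
    moreover have "(r + 1) * \<epsilon> = 2 * (r * (\<epsilon> / 2)) + \<epsilon>" by (simp add: algebra_simps)
    ultimately show ?thesis using \<beta>(1) by linarith
  qed
  with \<rho> show ?thesis by blast
qed

lemma feedback_cost_le:
  assumes \<epsilon>: "0 < \<epsilon>"
  obtains \<kappa>0 where "0 < \<kappa>0"
    "\<And>\<kappa> b V r y. 0 < \<kappa> \<Longrightarrow> \<kappa> \<le> \<kappa>0 \<Longrightarrow> feedback_law L \<phi> \<kappa> b V \<Longrightarrow> 0 < r \<Longrightarrow>
      \<exists>\<rho>>0. \<forall>n t. is_partition r n t \<and> fineness n t < \<rho> \<longrightarrow>
        feedback_cost L \<phi> V y r n t \<le> \<phi> y - Hbar * r + (r + 1) * \<epsilon>"
proof -
  obtain K where K: "0 < K" and lip: "\<And>x y. \<phi> x - \<phi> y \<le> K * norm (x - y)"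
    using phi_lipschitz by blast
  obtain M where M: "\<And>x p v. norm p \<le> 2 * K \<Longrightarrow> hamiltonian_maximizer L x p v \<Longrightarrow> norm v \<le> M"
    using hamiltonian_maximizer_norm_le[where R = "2 * K"] by blast
  have "0 < \<epsilon> / 2" using \<epsilon> by simp
  then obtain \<delta> where \<delta>: "0 < \<delta>"
    and uc: "\<And>x x' v. norm v \<le> M \<Longrightarrow> dist x x' < \<delta> \<Longrightarrow> \<bar>L x v - L x' v\<bar> < \<epsilon> / 2"
    using L_uniformly_continuous_in_x[where M = M] by blast
  have "0 < \<delta> / 2" using \<delta> by simp
  then obtain \<kappa>0 where \<kappa>0: "0 < \<kappa>0"
    and scale: "\<And>\<kappa>. \<bar>\<kappa>\<bar> \<le> \<kappa>0 \<Longrightarrow> 2 * \<kappa>\<^sup>2 * K \<le> \<delta> / 2 \<and> K * (2 * \<kappa>\<^sup>2 * K) \<le> \<epsilon>"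
    using exists_small_scale[OF K _ \<epsilon>] by blast
  have "\<exists>\<rho>>0. \<forall>n t. is_partition r n t \<and> fineness n t < \<rho> \<longrightarrow>
      feedback_cost L \<phi> V y r n t \<le> \<phi> y - Hbar * r + (r + 1) * \<epsilon>"
    if \<kappa>: "0 < \<kappa>" "\<kappa> \<le> \<kappa>0" and fb: "feedback_law L \<phi> \<kappa> b V" and r: "0 < r" for \<kappa> b V r y
  proof -
    have nb: "norm (b x) \<le> 2 * \<kappa>\<^sup>2 * K" for x
    proof (rule inf_conv_minimizer_norm_le[where \<psi> = \<phi>])
      show "inf_conv_minimizer \<kappa> \<phi> x (b x)" using fb unfolding feedback_law_def by blast
      show "\<phi> x - \<phi> (x + b x) \<le> K * norm (b x)" using lip[of x "x + b x"] by simp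
    qed (use \<kappa>(1) K in auto)
    have nV: "norm (V x) \<le> M" for x
    proof (rule M)
      show "hamiltonian_maximizer L (x + b x) ((1 / \<kappa>\<^sup>2) *\<^sub>R b x) (V x)"
        using fb unfolding feedback_law_def by blast
      show "norm ((1 / \<kappa>\<^sup>2) *\<^sub>R b x) \<le> 2 * K"
        using nb[of x] \<kappa>(1) by (simp add: pos_divide_le_eq mult_ac)
    qed
    show ?thesis
    proof (rule feedback_cost_eventually_le[OF \<kappa>(1) fb lip _ nb _ _ nV _ \<epsilon> \<delta> r])
      show "L x' v \<le> L x v + \<epsilon> / 2" if "norm v \<le> M" "dist x x' < \<delta>" for x x' v
        using uc[OF that] by linarith
    qed (use K scale[of \<kappa>] \<kappa> in auto)
  qed
  with \<kappa>0(1) show thesis by (rule that)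
qed

lemma lax_oleinik_le:
  assumes r: "0 < r"
  shows "lax_oleinik L r \<phi> y \<le> ereal (\<phi> y - r * Hbar)"
proof (rule ereal_le_epsilon2)
  fix e :: real assume "0 < e"
  define \<epsilon> where "\<epsilon> = e / (r + 1)"
  have \<epsilon>: "0 < \<epsilon>" "(r + 1) * \<epsilon> = e" using \<open>0 < e\<close> r unfolding \<epsilon>_def by auto
  obtain \<kappa>0 where \<kappa>0: "0 < \<kappa>0" and cost: "\<And>\<kappa> b V r y. 0 < \<kappa> \<Longrightarrow> \<kappa> \<le> \<kappa>0 \<Longrightarrow> feedback_law L \<phi> \<kappa> b V \<Longrightarrow>
      0 < r \<Longrightarrow> \<exists>\<rho>>0. \<forall>n t. is_partition r n t \<and> fineness n t < \<rho> \<longrightarrow>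
        feedback_cost L \<phi> V y r n t \<le> \<phi> y - Hbar * r + (r + 1) * \<epsilon>"
    using feedback_cost_le[OF \<epsilon>(1)] by blast
  have "\<kappa>0 \<noteq> 0" using \<kappa>0 by simp
  then obtain b V where fb: "feedback_law L \<phi> \<kappa>0 b V" using feedback_law_exists by blast
  obtain \<rho> where \<rho>: "0 < \<rho>" and bound: "\<And>n t. is_partition r n t \<Longrightarrow> fineness n t < \<rho> \<Longrightarrow>
      feedback_cost L \<phi> V y r n t \<le> \<phi> y - Hbar * r + (r + 1) * \<epsilon>"
    using cost[OF \<kappa>0 order_refl fb r, of y] by blast
  obtain n t where part: "is_partition r n t" and fine: "fineness n t < \<rho>"
    using exists_partition_fineness_less[OF r \<rho>] by blast
  have "lax_oleinik L r \<phi> y \<le> ereal (feedback_cost L \<phi> V y r n t)"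
    by (rule lax_oleinik_le_feedback_cost[OF part r])
  also have "\<dots> \<le> ereal (\<phi> y - r * Hbar) + ereal e"
    using bound[OF part fine] \<epsilon>(2) by (simp add: mult.commute)
  finally show "lax_oleinik L r \<phi> y \<le> ereal (\<phi> y - r * Hbar) + ereal e" .
qed

lemma lax_oleinik_eq: "0 < r \<Longrightarrow> lax_oleinik L r \<phi> y = ereal (\<phi> y - r * Hbar)"
  using lax_oleinik_le lax_oleinik_ge by (rule antisym)

lemma feedback_limsup_le:
  assumes \<epsilon>: "0 < \<epsilon>" and fb: "\<And>\<kappa>. 0 < \<kappa> \<Longrightarrow> \<exists>b. feedback_law L \<phi> \<kappa> b (V \<kappa>)"
  shows "\<exists>\<kappa>0>0. \<forall>\<kappa>\<in>{0<..\<kappa>0}. \<forall>r>0. \<forall>y.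
    limsup_fine r (feedback_cost L \<phi> (V \<kappa>) y r) \<le> ereal (\<phi> y - Hbar * r + (r + 1) * \<epsilon>)"
proof -
  obtain \<kappa>0 where \<kappa>0: "0 < \<kappa>0" and cost: "\<And>\<kappa> b V r y. 0 < \<kappa> \<Longrightarrow> \<kappa> \<le> \<kappa>0 \<Longrightarrow> feedback_law L \<phi> \<kappa> b V \<Longrightarrow>
      0 < r \<Longrightarrow> \<exists>\<rho>>0. \<forall>n t. is_partition r n t \<and> fineness n t < \<rho> \<longrightarrow>
        feedback_cost L \<phi> V y r n t \<le> \<phi> y - Hbar * r + (r + 1) * \<epsilon>"
    using feedback_cost_le[OF \<epsilon>] by blast
  have "limsup_fine r (feedback_cost L \<phi> (V \<kappa>) y r) \<le> ereal (\<phi> y - Hbar * r + (r + 1) * \<epsilon>)"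
    if \<kappa>: "\<kappa> \<in> {0<..\<kappa>0}" and r: "0 < r" for \<kappa> r y
  proof -
    obtain b where "feedback_law L \<phi> \<kappa> b (V \<kappa>)" using fb \<kappa> by auto
    then obtain \<rho> where "0 < \<rho>" and "\<forall>n t. is_partition r n t \<and> fineness n t < \<rho> \<longrightarrow>
        feedback_cost L \<phi> (V \<kappa>) y r n t \<le> \<phi> y - Hbar * r + (r + 1) * \<epsilon>"
      using cost[of \<kappa> b "V \<kappa>" r y] \<kappa> r by auto
    then show ?thesis by (intro limsup_fine_le) auto
  qed
  with \<kappa>0 show ?thesis by blast
qed

end

theorem theorem3:
  fixes L :: "real^'d \<Rightarrow> real^'d \<Rightarrow> real"
    and \<phi> :: "real^'d \<Rightarrow> real"
    and Hbar :: real
  assumes L_cont: "continuous_on UNIV (\<lambda>(x, v). L x v)"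
    and L_per: "\<And>v. periodic (\<lambda>x. L x v)"
    and L_superlin: "filterlim (\<lambda>v. (INF x. L x v) / norm v) at_top at_infinity"
    and visc: "viscosity_solution L \<phi> Hbar"
  shows "(\<forall>r>0. \<forall>y. lax_oleinik L r \<phi> y = ereal (\<phi> y - r * Hbar)) \<and>
    (\<forall>b vv :: real \<Rightarrow> real^'d \<Rightarrow> real^'d.
       (\<forall>\<kappa>>0. periodic (b \<kappa>) \<and> periodic (vv \<kappa>) \<and>
          (\<forall>x. (\<forall>w. \<phi> (x + b \<kappa> x) + (norm (b \<kappa> x))\<^sup>2 / (2 * \<kappa>\<^sup>2) \<le> \<phi> (x + w) + (norm w)\<^sup>2 / (2 * \<kappa>\<^sup>2)) \<and>
               (let p = (1 / \<kappa>\<^sup>2) *\<^sub>R (- b \<kappa> x) in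
                 \<forall>w. - p \<bullet> w - L (x + b \<kappa> x) w \<le> - p \<bullet> vv \<kappa> x - L (x + b \<kappa> x) (vv \<kappa> x))))
       \<longrightarrow> (\<forall>\<epsilon>>0. \<exists>\<kappa>0>0. \<forall>\<kappa>\<in>{0<..\<kappa>0}. \<forall>r>0. \<forall>y.
              limsup_fine r (feedback_cost L \<phi> (vv \<kappa>) y r)
                \<le> ereal (\<phi> y - Hbar * r + (r + 1) * \<epsilon>)))"
proof -
  interpret hj_solution L \<phi> Hbar
    using assms by unfold_locales
  have feedback: "\<exists>b'. feedback_law L \<phi> \<kappa> b' (vv \<kappa>)"
    if "\<forall>\<kappa>>0. periodic (b \<kappa>) \<and> periodic (vv \<kappa>) \<and>
          (\<forall>x. (\<forall>w. \<phi> (x + b \<kappa> x) + (norm (b \<kappa> x))\<^sup>2 / (2 * \<kappa>\<^sup>2) \<le> \<phi> (x + w) + (norm w)\<^sup>2 / (2 * \<kappa>\<^sup>2)) \<and>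
               (let p = (1 / \<kappa>\<^sup>2) *\<^sub>R (- b \<kappa> x) in
                 \<forall>w. - p \<bullet> w - L (x + b \<kappa> x) w \<le> - p \<bullet> vv \<kappa> x - L (x + b \<kappa> x) (vv \<kappa> x)))"
      and "0 < \<kappa>" for b vv :: "real \<Rightarrow> real^'d \<Rightarrow> real^'d" and \<kappa>
    using that unfolding feedback_law_def inf_conv_minimizer_def hamiltonian_maximizer_def Let_def
    by (intro exI[of _ "b \<kappa>"]) simp
  show ?thesis
    by (intro conjI allI impI lax_oleinik_eq feedback_limsup_le; (rule feedback)?; assumption)
qed

end
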